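(* Assume $a(\eta_b)d(\eta_b/q)\neq0$ for all $b\in\{1,\dots,\mathsf N\}$. Define $\det\bar{\mathsf M}(\eta_b):=\mathsf B(\eta_b)\mathsf C(\eta_b/q)-\mathsf A(\eta_b)\mathsf D(\eta_b/q)$. Then for each $b$, $\bar{\mathsf T}(\eta_b)\bar{\mathsf T}(\eta_b/q)=\det\bar{\mathsf M}(\eta_b)=a(\eta_b)d(\eta_b/q)\,\mathbb I$, and for every $n\in\{1,\dots,\mathsf N\}$ and every $2\times2$ matrix $X$, $X_n=\prod_{b=1}^{n-1}\bar{\mathsf T}(\eta_b)\;\mathrm{tr}_0\big(\mathsf M_0(\eta_n)X_0\sigma^x_0\big)\prod_{b=1}^{n}\frac{\bar{\mathsf T}(\eta_b/q)}{\det\bar{\mathsf M}(\eta_b)}$ $\phantom{X_n}=\prod_{b=1}^{n}\bar{\mathsf T}(\eta_b)\;\frac{\mathrm{tr}_0\big(\sigma^z_0\mathsf M_0^{t_0}(\eta_n/q)\sigma^z_0X_0\sigma^x_0\big)}{\det\mathsf M(\eta_n)}\prod_{b=1}^{n-1}\frac{\bar{\mathsf T}(\eta_b/q)}{\det\bar{\mathsf M}(\eta_b)}$, where $\det\mathsf M(\eta_n)=-a(\eta_n)d(\eta_n/q)$.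
   Context: Fix $q=e^{\eta}\in\mathbb C$, $q\neq\pm1$, $\mathsf N\ge1$, inhomogeneities $\eta_1,\dots,\eta_{\mathsf N}\in\mathbb C\setminus\{0\}$. $\mathcal R_{\mathsf N}=\bigotimes_{n=1}^{\mathsf N}\mathbb C^2$; $\sigma^x,\sigma^z$ Pauli matrices, $\sigma^+=E_{12}$, $\sigma^-=E_{21}$; $X_n$ denotes $X$ acting on the $n$-th tensor factor, $X_0$ denotes $X$ acting on an auxiliary space $0\cong\mathbb C^2$; $\mathrm{tr}_0$ is the partial trace and $t_0$ the partial transpose over space $0$. Lax operator $\mathsf L_{0n}(\lambda)=\begin{pmatrix}x_+(\lambda)+x_-(\lambda)\sigma^z_n & (q-q^{-1})\sigma^-_n\\ (q-q^{-1})\sigma^+_n & x_+(\lambda)-x_-(\lambda)\sigma^z_n\end{pmatrix}$, $x_\pm(\lambda)=\tfrac12(\lambda q-(q\lambda)^{-1}\pm(\lambda-\lambda^{-1}))$; monodromy $\mathsf M_0(\lambda)=\mathsf L_{0\mathsf N}(\lambda/\eta_{\mathsf N})\cdots\mathsf L_{01}(\lambda/\eta_1)=\begin{pmatrix}\mathsf A&\mathsf B\\ \mathsf C&\mathsf D\end{pmatrix}(\lambda)$; quantum determinant $\det\mathsf M(\lambda)=\mathsf A(\lambda)\mathsf D(\lambda/q)-\mathsf B(\lambda)\mathsf C(\lambda/q)$; antiperiodic transfer matrix $\bar{\mathsf T}(\lambda)=\mathsf B(\lambda)+\mathsf C(\lambda)$ (commuting family). $a(\lambda)=-\prod_n(\lambda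 q/\eta_n-\eta_n/(\lambda q))$, $d(\lambda)=\prod_n(\lambda/\eta_n-\eta_n/\lambda)$. *)

theory Defs
  imports Complex_Main
begin

text \<open>Quantum space R_N = (C^2)^{tensor N}: operators are matrices indexed by basis
 states, i.e. 0/1-lists of length N (entry m of the list is the state of site m+1,
 0 = first basis vector, 1 = second).  All operators built below vanish outside
 the basis states, so operator equality is plain function equality.\<close>

type_synonym cop = "nat list \<Rightarrow> nat list \<Rightarrow> complex"
type_synonym aop = "nat \<Rightarrow> nat \<Rightarrow> cop"  \<comment> \<open>2x2 matrix (aux space 0) of operators\<close>

definition states :: "nat \<Rightarrow> nat list set" where
  "states N = {xs. length xs = N \<and> set xs \<subseteq> {0, 1}}"

definition op_id :: "nat \<Rightarrow> cop" where
  "op_id N = (\<lambda>i j. if i \<in> states N \<and> i = j then 1 else 0)"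

definition op_mult :: "nat \<Rightarrow> cop \<Rightarrow> cop \<Rightarrow> cop" where
  "op_mult N A B = (\<lambda>i j. \<Sum>k\<in>states N. A i k * B k j)"

definition op_add :: "cop \<Rightarrow> cop \<Rightarrow> cop" where
  "op_add A B = (\<lambda>i j. A i j + B i j)"

definition op_smult :: "complex \<Rightarrow> cop \<Rightarrow> cop" where
  "op_smult c A = (\<lambda>i j. c * A i j)"

definition op_diff :: "cop \<Rightarrow> cop \<Rightarrow> cop" where
  "op_diff A B = (\<lambda>i j. A i j - B i j)"

definition op_prod :: "nat \<Rightarrow> cop list \<Rightarrow> cop" where
  "op_prod N As = foldr (op_mult N) As (op_id N)"

text \<open>X_n: the 2x2 matrix X acting on the n-th tensor factor (1 <= n <= N).\<close>
definition loc :: "nat \<Rightarrow> nat \<Rightarrow> (nat \<Rightarrow> nat \<Rightarrow> complex) \<Rightarrow> cop" where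
  "loc N n X = (\<lambda>i j. if i \<in> states N \<and> j \<in> states N \<and> (\<forall>m<N. m \<noteq> n - 1 \<longrightarrow> i ! m = j ! m)
                       then X (i ! (n - 1)) (j ! (n - 1)) else 0)"

definition id2 :: "nat \<Rightarrow> nat \<Rightarrow> complex" where
  "id2 a b = (if a = b \<and> a < 2 then 1 else 0)"
definition sigz :: "nat \<Rightarrow> nat \<Rightarrow> complex" where
  "sigz a b = (if a = 0 \<and> b = 0 then 1 else if a = 1 \<and> b = 1 then -1 else 0)"
definition sigx :: "nat \<Rightarrow> nat \<Rightarrow> complex" where
  "sigx a b = (if (a = 0 \<and> b = 1) \<or> (a = 1 \<and> b = 0) then 1 else 0)"
definition sigp :: "nat \<Rightarrow> nat \<Rightarrow> complex" where
  "sigp a b = (if a = 0 \<and> b = 1 then 1 else 0)"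
definition sigm :: "nat \<Rightarrow> nat \<Rightarrow> complex" where
  "sigm a b = (if a = 1 \<and> b = 0 then 1 else 0)"

definition aux_mult :: "nat \<Rightarrow> aop \<Rightarrow> aop \<Rightarrow> aop" where
  "aux_mult N M P = (\<lambda>a c. op_add (op_mult N (M a 0) (P 0 c)) (op_mult N (M a 1) (P 1 c)))"

text \<open>X_0: a scalar 2x2 matrix on space 0 (tensor identity on R_N).\<close>
definition aux_scalar :: "nat \<Rightarrow> (nat \<Rightarrow> nat \<Rightarrow> complex) \<Rightarrow> aop" where
  "aux_scalar N X = (\<lambda>a b. op_smult (X a b) (op_id N))"

definition ptrace :: "aop \<Rightarrow> cop" where
  "ptrace M = op_add (M 0 0) (M 1 1)"

definition ptransp :: "aop \<Rightarrow> aop" where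
  "ptransp M = (\<lambda>a b. M b a)"

definition xp :: "complex \<Rightarrow> complex \<Rightarrow> complex" where
  "xp q l = (l * q - inverse (q * l) + (l - inverse l)) / 2"
definition xm :: "complex \<Rightarrow> complex \<Rightarrow> complex" where
  "xm q l = (l * q - inverse (q * l) - (l - inverse l)) / 2"

definition lax :: "nat \<Rightarrow> complex \<Rightarrow> nat \<Rightarrow> complex \<Rightarrow> aop" where
  "lax N q n l = (\<lambda>a b.
     if a = 0 \<and> b = 0 then op_add (op_smult (xp q l) (op_id N)) (op_smult (xm q l) (loc N n sigz))
     else if a = 0 \<and> b = 1 then op_smult (q - inverse q) (loc N n sigm)
     else if a = 1 \<and> b = 0 then op_smult (q - inverse q) (loc N n sigp)
     else if a = 1 \<and> b = 1 then op_diff (op_smult (xp q l) (op_id N)) (op_smult (xm q l) (loc N n sigz))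
     else (\<lambda>_ _. 0))"

primrec mono :: "nat \<Rightarrow> complex \<Rightarrow> (nat \<Rightarrow> complex) \<Rightarrow> nat \<Rightarrow> complex \<Rightarrow> aop" where
  "mono N q eta 0 l = aux_scalar N id2"
| "mono N q eta (Suc k) l = aux_mult N (lax N q (Suc k) (l / eta (Suc k))) (mono N q eta k l)"

definition monodromy :: "nat \<Rightarrow> complex \<Rightarrow> (nat \<Rightarrow> complex) \<Rightarrow> complex \<Rightarrow> aop" where
  "monodromy N q eta l = mono N q eta N l"

definition opA where "opA N q eta l = monodromy N q eta l 0 0"
definition opB where "opB N q eta l = monodromy N q eta l 0 1"
definition opC where "opC N q eta l = monodromy N q eta l 1 0"
definition opD where "opD N q eta l = monodromy N q eta l 1 1"

definition Tbar :: "nat \<Rightarrow> complex \<Rightarrow> (nat \<Rightarrow> complex) \<Rightarrow> complex \<Rightarrow> cop" where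
  "Tbar N q eta l = op_add (opB N q eta l) (opC N q eta l)"

definition qdet :: "nat \<Rightarrow> complex \<Rightarrow> (nat \<Rightarrow> complex) \<Rightarrow> complex \<Rightarrow> cop" where
  "qdet N q eta l = op_diff (op_mult N (opA N q eta l) (opD N q eta (l / q)))
                             (op_mult N (opB N q eta l) (opC N q eta (l / q)))"

definition qdetbar :: "nat \<Rightarrow> complex \<Rightarrow> (nat \<Rightarrow> complex) \<Rightarrow> complex \<Rightarrow> cop" where
  "qdetbar N q eta l = op_diff (op_mult N (opB N q eta l) (opC N q eta (l / q)))
                                (op_mult N (opA N q eta l) (opD N q eta (l / q)))"

definition afun :: "nat \<Rightarrow> complex \<Rightarrow> (nat \<Rightarrow> complex) \<Rightarrow> complex \<Rightarrow> complex" where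
  "afun N q eta l = - (\<Prod>n=1..N. l * q / eta n - eta n / (l * q))"

definition dfun :: "nat \<Rightarrow> (nat \<Rightarrow> complex) \<Rightarrow> complex \<Rightarrow> complex" where
  "dfun N eta l = (\<Prod>n=1..N. l / eta n - eta n / l)"

end

theory Submission
  imports Defs "HOL-Library.Function_Algebras"
begin

(*
  The proof follows the algebraic route of the quantum inverse problem.
  (1) Operators on R_N and 2x2 matrices of them over the auxiliary space are developed
      as concrete algebras; operators supported on disjoint sets of sites commute.
  (2) The Lax operator satisfies three local identities, checked by finite computation:
      fusion L(u) adj L(u/q) = delta(u), unitarity L(x) L(1/x) = rho(x), and the local
      Yang-Baxter (RTT) relation.  Being multiplicative, fusion and RTT propagate to the
      monodromy: the quantum determinant is the scalar -a(l) d(l/q), and the RTT relation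
      makes T(eta_b) and T(eta_c) commute.
  (3) At l = eta_b and l = eta_b/q the Lax operator at site b degenerates to a permutation,
      resp. an adjugated permutation, so that partial traces against M_0 become operators
      on site b built from the monodromy cut at b.  This yields
      T(eta_b) T(eta_b/q) = a(eta_b) d(eta_b/q) and an exchange relation for traces.
  (4) By induction, T(eta_1) ... T(eta_m) factorizes through sigma^x_1 ... sigma^x_m, which
      gives T(eta_1)..T(eta_(n-1)) tr_0(M_0(eta_n) X_0 sigma^x_0) = X_n T(eta_1)..T(eta_n).
  (5) Inverting the commuting T(eta_b) by T(eta_b/q)/(a d) gives both reconstruction formulas;
      the theorem is assembled from these named facts at the end.
*)

section \<open>The operator algebra on the quantum space\<close>

lemma op_add_eq: "op_add A B = A + B" by (simp add: op_add_def fun_eq_iff)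
lemma op_diff_eq: "op_diff A B = A - B" by (simp add: op_diff_def fun_eq_iff)

lemma finite_states [simp]: "finite (states N)"
proof -
  have "states N = {xs. set xs \<subseteq> {0,1} \<and> length xs = N}" by (auto simp: states_def)
  then show ?thesis using finite_lists_length_eq[of "{0::nat,1}" N] by simp
qed

text \<open>An operator lives on the quantum space if it vanishes outside the basis states;
  on such operators \<open>op_id\<close> is a two-sided unit.\<close>
definition on_states :: "nat \<Rightarrow> cop \<Rightarrow> bool" where
  "on_states N A \<longleftrightarrow> (\<forall>i j. (i \<notin> states N \<or> j \<notin> states N) \<longrightarrow> A i j = 0)"

lemma op_mult_assoc: "op_mult N (op_mult N A B) C = op_mult N A (op_mult N B C)"
  unfolding op_mult_def
  by (auto simp: fun_eq_iff sum_distrib_left sum_distrib_right mult.assoc intro: sum.swap)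

lemma op_mult_add_left: "op_mult N (A + B) C = op_mult N A C + op_mult N B C"
  by (simp add: op_mult_def fun_eq_iff distrib_right sum.distrib)
lemma op_mult_add_right: "op_mult N C (A + B) = op_mult N C A + op_mult N C B"
  by (simp add: op_mult_def fun_eq_iff distrib_left sum.distrib)
lemma op_mult_diff_left: "op_mult N (A - B) C = op_mult N A C - op_mult N B C"
  by (simp add: op_mult_def fun_eq_iff left_diff_distrib sum_subtractf)
lemma op_mult_diff_right: "op_mult N C (A - B) = op_mult N C A - op_mult N C B"
  by (simp add: op_mult_def fun_eq_iff right_diff_distrib sum_subtractf)
lemma op_mult_uminus_left: "op_mult N (- A) C = - op_mult N A C"
  by (simp add: op_mult_def fun_eq_iff sum_negf)
lemma op_mult_uminus_right: "op_mult N C (- A) = - op_mult N C A"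
  by (simp add: op_mult_def fun_eq_iff sum_negf)
lemma op_mult_zero_left [simp]: "op_mult N 0 C = 0"
  by (simp add: op_mult_def fun_eq_iff)
lemma op_mult_zero_right [simp]: "op_mult N C 0 = 0"
  by (simp add: op_mult_def fun_eq_iff)
lemma op_mult_smult_left: "op_mult N (op_smult c A) B = op_smult c (op_mult N A B)"
  by (simp add: op_mult_def op_smult_def fun_eq_iff sum_distrib_left mult.assoc)
lemma op_mult_smult_right: "op_mult N A (op_smult c B) = op_smult c (op_mult N A B)"
  by (simp add: op_mult_def op_smult_def fun_eq_iff sum_distrib_left mult.assoc mult.left_commute)

lemma op_smult_add: "op_smult c (A + B) = op_smult c A + op_smult c B"
  by (simp add: op_smult_def fun_eq_iff distrib_left)
lemma op_smult_uminus: "op_smult c (- A) = - op_smult c A"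
  by (simp add: op_smult_def fun_eq_iff)
lemma op_smult_smult: "op_smult c (op_smult d A) = op_smult (c * d) A"
  by (simp add: op_smult_def fun_eq_iff)
lemma op_mult_smult_both: "op_mult N (op_smult a A) (op_smult b B) = op_smult (a * b) (op_mult N A B)"
  by (simp add: op_mult_smult_left op_mult_smult_right op_smult_smult mult.commute)
lemma op_smult_zero [simp]: "op_smult c 0 = 0" "op_smult 0 A = 0"
  by (simp_all add: op_smult_def fun_eq_iff)
lemma op_smult_one [simp]: "op_smult 1 A = A"
  by (simp add: op_smult_def fun_eq_iff)
lemma op_smult_add_scalar: "op_smult (c + d) A = op_smult c A + op_smult d A"
  by (simp add: op_smult_def fun_eq_iff distrib_right)
lemma op_smult_minus_scalar: "op_smult (- c) A = - op_smult c A"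
  by (simp add: op_smult_def fun_eq_iff)

lemma op_id_left: "on_states N A \<Longrightarrow> op_mult N (op_id N) A = A"
proof -
  assume w: "on_states N A"
  have "(\<Sum>k\<in>states N. op_id N i k * A k j) = A i j" for i j
  proof (cases "i \<in> states N")
    case True
    then have "(\<Sum>k\<in>states N. op_id N i k * A k j) = (\<Sum>k\<in>{i}. op_id N i k * A k j)"
      by (intro sum.mono_neutral_right) (auto simp: op_id_def)
    then show ?thesis using True by (simp add: op_id_def)
  next
    case False then show ?thesis using w by (simp add: op_id_def on_states_def)
  qed
  then show ?thesis by (simp add: op_mult_def fun_eq_iff)
qed

lemma op_id_right: "on_states N A \<Longrightarrow> op_mult N A (op_id N) = A"
proof -
  assume w: "on_states N A"
  have "(\<Sum>k\<in>states N. A i k * op_id N k j) = A i j" for i j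
  proof (cases "j \<in> states N")
    case True
    then have "(\<Sum>k\<in>states N. A i k * op_id N k j) = (\<Sum>k\<in>{j}. A i k * op_id N k j)"
      by (intro sum.mono_neutral_right) (auto simp: op_id_def)
    then show ?thesis using True by (simp add: op_id_def)
  next
    case False then show ?thesis using w by (auto simp: op_id_def on_states_def intro!: sum.neutral)
  qed
  then show ?thesis by (simp add: op_mult_def fun_eq_iff)
qed

lemma on_states_id [simp]: "on_states N (op_id N)" by (simp add: on_states_def op_id_def)
lemma on_states_zero [simp]: "on_states N 0" by (simp add: on_states_def)
lemma on_states_add [simp]: "on_states N A \<Longrightarrow> on_states N B \<Longrightarrow> on_states N (A + B)"
  by (simp add: on_states_def)
lemma on_states_uminus [simp]: "on_states N A \<Longrightarrow> on_states N (- A)" by (simp add: on_states_def)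
lemma on_states_smult [simp]: "on_states N A \<Longrightarrow> on_states N (op_smult c A)"
  by (simp add: on_states_def op_smult_def)
lemma on_states_mult [simp]: "on_states N A \<Longrightarrow> on_states N B \<Longrightarrow> on_states N (op_mult N A B)"
  by (auto simp: on_states_def op_mult_def)

lemma op_mult_id_smult: "on_states N A \<Longrightarrow> op_mult N (op_smult c (op_id N)) A = op_smult c A"
  by (simp add: op_mult_smult_left op_id_left)
lemma op_mult_smult_id: "on_states N A \<Longrightarrow> op_mult N A (op_smult c (op_id N)) = op_smult c A"
  by (simp add: op_mult_smult_right op_id_right)


lemma on_states_op_prod: "(\<And>x. x \<in> set xs \<Longrightarrow> on_states N x) \<Longrightarrow> on_states N (op_prod N xs)"
  by (induction xs) (auto simp: op_prod_def)

lemma op_prod_append: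
  "(\<And>x. x \<in> set ys \<Longrightarrow> on_states N x) \<Longrightarrow> op_prod N (xs @ ys) = op_mult N (op_prod N xs) (op_prod N ys)"
  by (induction xs) (auto simp: op_prod_def op_id_left on_states_op_prod[unfolded op_prod_def] op_mult_assoc)

lemma op_prod_snoc:
  "(\<And>x. x \<in> set xs \<Longrightarrow> on_states N x) \<Longrightarrow> on_states N y \<Longrightarrow> op_prod N (xs @ [y]) = op_mult N (op_prod N xs) y"
  by (subst op_prod_append) (auto simp: op_prod_def op_id_right)

lemma op_prod_commute:
  assumes "\<And>y. y \<in> set xs \<Longrightarrow> op_mult N x y = op_mult N y x" "\<And>y. y \<in> set xs \<Longrightarrow> on_states N y"
    and "on_states N x"
  shows "op_mult N x (op_prod N xs) = op_mult N (op_prod N xs) x"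
  using assms
proof (induction xs)
  case Nil then show ?case by (simp add: op_prod_def op_id_left op_id_right)
next
  case (Cons y ys)
  have "op_mult N x (op_mult N y (op_prod N ys)) = op_mult N y (op_mult N x (op_prod N ys))"
    using Cons.prems by (metis list.set_intros(1) op_mult_assoc)
  also have "\<dots> = op_mult N (op_mult N y (op_prod N ys)) x"
    using Cons by (simp add: op_mult_assoc)
  finally show ?case by (simp add: op_prod_def)
qed

lemma op_prod_rev:
  assumes "\<And>x y. x \<in> set xs \<Longrightarrow> y \<in> set xs \<Longrightarrow> op_mult N x y = op_mult N y x"
    and "\<And>x. x \<in> set xs \<Longrightarrow> on_states N x"
  shows "op_prod N (rev xs) = op_prod N xs"
  using assms
proof (induction xs)
  case Nil then show ?case by simp
next
  case (Cons x xs)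
  have "op_prod N (rev (x # xs)) = op_mult N (op_prod N (rev xs)) x"
    using op_prod_snoc[of "rev xs" N x] Cons.prems by simp
  also have "\<dots> = op_mult N (op_prod N xs) x" using Cons by simp
  also have "\<dots> = op_mult N x (op_prod N xs)"
    by (rule op_prod_commute[symmetric]) (use Cons.prems in auto)
  finally show ?case by (simp add: op_prod_def)
qed

lemma op_prod_telescope:
  assumes "\<And>x. x \<in> set xs \<Longrightarrow> op_mult N (f x) (g x) = op_id N"
    and "\<And>x. x \<in> set xs \<Longrightarrow> on_states N (g x)"
  shows "op_mult N (op_prod N (rev (map f xs))) (op_prod N (map g xs)) = op_id N"
  using assms
proof (induction xs rule: rev_induct)
  case Nil then show ?case by (simp add: op_prod_def op_id_left)
next
  case (snoc x xs)
  have Pf: "op_prod N (rev (map f (xs @ [x]))) = op_mult N (f x) (op_prod N (rev (map f xs)))"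
    by (simp add: op_prod_def)
  have Pg: "op_prod N (map g (xs @ [x])) = op_mult N (op_prod N (map g xs)) (g x)"
    using snoc.prems op_prod_snoc[of "map g xs" N "g x"] by auto
  have "op_mult N (op_prod N (rev (map f (xs @ [x])))) (op_prod N (map g (xs @ [x])))
      = op_mult N (f x) (op_mult N (op_mult N (op_prod N (rev (map f xs))) (op_prod N (map g xs))) (g x))"
    by (simp only: Pf Pg op_mult_assoc)
  also have "\<dots> = op_id N" using snoc by (simp add: op_id_left)
  finally show ?case .
qed


definition mat2_mult :: "(nat \<Rightarrow> nat \<Rightarrow> complex) \<Rightarrow> (nat \<Rightarrow> nat \<Rightarrow> complex) \<Rightarrow> (nat \<Rightarrow> nat \<Rightarrow> complex)" where
  "mat2_mult X Y = (\<lambda>a b. X a 0 * Y 0 b + X a 1 * Y 1 b)"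

definition unit2 :: "nat \<Rightarrow> nat \<Rightarrow> nat \<Rightarrow> nat \<Rightarrow> complex" where
  "unit2 i j = (\<lambda>a b. if a = i \<and> b = j then 1 else 0)"

lemma states_nth: "i \<in> states N \<Longrightarrow> m < N \<Longrightarrow> i ! m = 0 \<or> i ! m = 1"
  unfolding states_def by (auto dest!: nth_mem)

lemma states_len: "i \<in> states N \<Longrightarrow> length i = N"
  unfolding states_def by auto

lemma upd_states: "i \<in> states N \<Longrightarrow> t < 2 \<Longrightarrow> i[p := t] \<in> states N"
  unfolding states_def using set_update_subset_insert[of i p t] by (auto simp: less_2_cases_iff)

text \<open>The basis states that agree with \<open>i\<close> away from site \<open>p\<close> are exactly
  \<open>i[p := 0]\<close> and \<open>i[p := 1]\<close>; this localises the matrix products of site operators.\<close>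
lemma sum_states_single:
  assumes i: "i \<in> states N" and p: "p < N"
    and z: "\<And>k. k \<in> states N \<Longrightarrow> \<not> (\<forall>m<N. m \<noteq> p \<longrightarrow> k ! m = i ! m) \<Longrightarrow> f k = 0"
  shows "(\<Sum>k\<in>states N. f k) = f (i[p := 0]) + f (i[p := 1])"
proof -
  have ne: "i[p:=0] \<noteq> i[p:=1]"
  proof
    assume "i[p:=0] = i[p:=1]"
    then have "i[p:=0] ! p = i[p:=1] ! p" by simp
    then show False using p states_len[OF i] by simp
  qed
  have support: "k = i[p := 0] \<or> k = i[p := 1]"
    if k: "k \<in> states N" and ag: "\<forall>m<N. m \<noteq> p \<longrightarrow> k ! m = i ! m" for k
  proof -
    have "k = i[p := k ! p]"
      using ag states_len[OF i] states_len[OF k] p by (intro nth_equalityI) (auto simp: nth_list_update)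
    then show ?thesis using states_nth[OF k p] by auto
  qed
  have "(\<Sum>k\<in>states N. f k) = (\<Sum>k\<in>{i[p:=0], i[p:=1]}. f k)"
  proof (rule sum.mono_neutral_right)
    show "\<forall>k\<in>states N - {i[p := 0], i[p := 1]}. f k = 0"
    proof
      fix k assume "k \<in> states N - {i[p := 0], i[p := 1]}"
      then show "f k = 0" using support[of k] z[of k] by blast
    qed
  qed (use upd_states[OF i] in auto)
  then show ?thesis using ne by simp
qed

lemma on_states_loc [simp]: "on_states N (loc N n X)"
  by (simp add: on_states_def loc_def)

lemma loc_mult_same:
  assumes n: "1 \<le> n" "n \<le> N"
  shows "op_mult N (loc N n X) (loc N n Y) = loc N n (mat2_mult X Y)"
proof (intro ext)
  fix i j
  let ?p = "n - 1"
  have p: "?p < N" using n by auto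
  show "op_mult N (loc N n X) (loc N n Y) i j = loc N n (mat2_mult X Y) i j"
  proof (cases "i \<in> states N")
    case False then show ?thesis by (simp add: op_mult_def loc_def)
  next
    case i: True
    have "op_mult N (loc N n X) (loc N n Y) i j
        = loc N n X i (i[?p:=0]) * loc N n Y (i[?p:=0]) j + loc N n X i (i[?p:=1]) * loc N n Y (i[?p:=1]) j"
      unfolding op_mult_def by (rule sum_states_single[OF i p]) (auto simp: loc_def)
    also have "\<dots> = loc N n (mat2_mult X Y) i j"
      using i p upd_states[OF i, of 0 ?p] upd_states[OF i, of 1 ?p] states_len[OF i]
      by (auto simp: loc_def mat2_mult_def nth_list_update)
    finally show ?thesis .
  qed
qed

text \<open>Operators on distinct sites multiply to the operator acting by \<open>X\<close> on one site
  and by \<open>Y\<close> on the other; the closed form is symmetric, so they commute.\<close>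
definition agree :: "nat \<Rightarrow> nat set \<Rightarrow> nat list \<Rightarrow> nat list \<Rightarrow> bool" where
  "agree N P i j \<longleftrightarrow> (\<forall>m<N. m \<notin> P \<longrightarrow> i ! m = j ! m)"

lemma agree_update:
  assumes "length i = N" "p < N" "p \<noteq> r"
  shows "(\<forall>m<N. m \<noteq> r \<longrightarrow> i[p := t] ! m = j ! m) \<longleftrightarrow> t = j ! p \<and> agree N {p, r} i j"
  using assms by (auto simp: agree_def nth_list_update)

lemma loc_mult_distinct:
  assumes n: "1 \<le> n" "n \<le> N" and m: "1 \<le> m" "m \<le> N" and mn: "m \<noteq> n"
  shows "op_mult N (loc N m X) (loc N n Y)
    = (\<lambda>i j. if i \<in> states N \<and> j \<in> states N \<and> agree N {m-1, n-1} i j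
              then X (i ! (m-1)) (j ! (m-1)) * Y (i ! (n-1)) (j ! (n-1)) else 0)"
proof (intro ext)
  fix i j
  let ?p = "m - 1" and ?r = "n - 1"
  have p: "?p < N" and r: "?r < N" and pr: "?p \<noteq> ?r" using n m mn by auto
  show "op_mult N (loc N m X) (loc N n Y) i j = (if i \<in> states N \<and> j \<in> states N \<and> agree N {?p, ?r} i j
     then X (i ! ?p) (j ! ?p) * Y (i ! ?r) (j ! ?r) else 0)"
  proof (cases "i \<in> states N")
    case False then show ?thesis by (simp add: op_mult_def loc_def)
  next
    case i: True
    have li: "length i = N" using states_len[OF i] .
    have summand: "loc N m X i (i[?p:=t]) * loc N n Y (i[?p:=t]) j
        = (if j \<in> states N \<and> t = j ! ?p \<and> agree N {?p, ?r} i j then X (i ! ?p) t * Y (i ! ?r) (j ! ?r) else 0)"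
      if "t < 2" for t
      using that i li p pr upd_states[OF i that, of ?p] agree_update[OF li p pr, of t j]
      by (auto simp: loc_def nth_list_update)
    have "op_mult N (loc N m X) (loc N n Y) i j
        = loc N m X i (i[?p:=0]) * loc N n Y (i[?p:=0]) j + loc N m X i (i[?p:=1]) * loc N n Y (i[?p:=1]) j"
      unfolding op_mult_def by (rule sum_states_single[OF i p]) (auto simp: loc_def)
    also have "\<dots> = (if j \<in> states N \<and> agree N {?p, ?r} i j then X (i ! ?p) (j ! ?p) * Y (i ! ?r) (j ! ?r) else 0)"
      using summand[of 0] summand[of 1] states_nth[of j N ?p] p by auto
    finally show ?thesis using i by simp
  qed
qed

lemma loc_comm:
  assumes "1 \<le> n" "n \<le> N" "1 \<le> m" "m \<le> N" and mn: "m \<noteq> n"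
  shows "op_mult N (loc N m X) (loc N n Y) = op_mult N (loc N n Y) (loc N m X)"
  unfolding loc_mult_distinct[OF assms] loc_mult_distinct[OF assms(3,4,1,2) mn[symmetric]]
  by (auto simp: fun_eq_iff insert_commute)

lemma loc_add: "loc N n (\<lambda>a b. X a b + Y a b) = loc N n X + loc N n Y"
  by (intro ext) (auto simp: loc_def)
lemma loc_diff: "loc N n (\<lambda>a b. X a b - Y a b) = loc N n X - loc N n Y"
  by (intro ext) (auto simp: loc_def)
lemma loc_uminus: "loc N n (\<lambda>a b. - X a b) = - loc N n X"
  by (intro ext) (auto simp: loc_def)
lemma loc_smult: "loc N n (\<lambda>a b. c * X a b) = op_smult c (loc N n X)"
  by (intro ext) (auto simp: loc_def op_smult_def)
lemma loc_zero: "loc N n (\<lambda>a b. 0) = 0"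
  by (intro ext) (simp add: loc_def)

lemma loc_id:
  assumes "1 \<le> n" "n \<le> N"
  shows "loc N n id2 = op_id N"
proof (intro ext)
  fix i j
  show "loc N n id2 i j = op_id N i j"
  proof (cases "i \<in> states N \<and> j \<in> states N")
    case True
    then have "length i = N" "length j = N" using states_len by auto
    moreover have "n - 1 < N" using assms by linarith
    then have "i ! (n-1) < 2" using True states_nth[of i N "n-1"] by auto
    ultimately show ?thesis using True assms
      by (auto simp: loc_def op_id_def id2_def intro: nth_equalityI)
  qed (auto simp: loc_def op_id_def)
qed

lemma loc_cong:
  assumes n: "1 \<le> n" "n \<le> N" and XY: "\<And>a b. a < 2 \<Longrightarrow> b < 2 \<Longrightarrow> X a b = Y a b"
  shows "loc N n X = loc N n Y"
proof (intro ext)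
  fix i j
  have p: "n - 1 < N" using n by linarith
  show "loc N n X i j = loc N n Y i j"
    using XY states_nth[of i N "n-1"] states_nth[of j N "n-1"] p by (auto simp: loc_def)
qed

lemma loc_sum: "(\<Sum>x\<in>S. loc N n (F x)) = loc N n (\<lambda>i j. \<Sum>x\<in>S. F x i j)"
proof -
  have "(\<Sum>x\<in>S. (f x :: cop)) i j = (\<Sum>x\<in>S. f x i j)" for f i j
    by (induction S rule: infinite_finite_induct) auto
  then show ?thesis by (intro ext) (simp add: loc_def if_distrib cong: if_cong)
qed


text \<open>The simplifier expands sums of functions pointwise; these rules fold the result
  back into operator sums.\<close>
lemma cop_eta_add [simp]: "(\<lambda>a b. (A::cop) a b + B a b) = A + B" by (simp add: fun_eq_iff)
lemma cop_eta_zero [simp]: "(\<lambda>(a::nat list) (b::nat list). (0::complex)) = 0" by (simp add: fun_eq_iff)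

inductive_set site_alg :: "nat \<Rightarrow> nat set \<Rightarrow> cop set" for N S where
  site_alg_loc: "s \<in> S \<Longrightarrow> 1 \<le> s \<Longrightarrow> s \<le> N \<Longrightarrow> loc N s X \<in> site_alg N S"
| site_alg_id: "op_id N \<in> site_alg N S"
| site_alg_zero: "0 \<in> site_alg N S"
| site_alg_add: "A \<in> site_alg N S \<Longrightarrow> B \<in> site_alg N S \<Longrightarrow> A + B \<in> site_alg N S"
| site_alg_mult: "A \<in> site_alg N S \<Longrightarrow> B \<in> site_alg N S \<Longrightarrow> op_mult N A B \<in> site_alg N S"
| site_alg_smult: "A \<in> site_alg N S \<Longrightarrow> op_smult c A \<in> site_alg N S"

lemma site_alg_on_states: "A \<in> site_alg N S \<Longrightarrow> on_states N A"
  by (induction rule: site_alg.induct) auto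

lemma site_alg_uminus: "A \<in> site_alg N S \<Longrightarrow> - A \<in> site_alg N S"
  using site_alg_smult[of A N S "-1"] by (simp add: op_smult_minus_scalar)

lemma site_alg_mono: "A \<in> site_alg N S \<Longrightarrow> S \<subseteq> T \<Longrightarrow> A \<in> site_alg N T"
  by (induction rule: site_alg.induct) (auto intro: site_alg.intros)

lemma site_alg_op_prod: "(\<And>x. x \<in> set xs \<Longrightarrow> x \<in> site_alg N S) \<Longrightarrow> op_prod N xs \<in> site_alg N S"
  by (induction xs) (auto simp: op_prod_def intro: site_alg.intros)

lemma site_alg_comm_loc:
  assumes "A \<in> site_alg N S" "t \<notin> S" "1 \<le> t" "t \<le> N"
  shows "op_mult N (loc N t Y) A = op_mult N A (loc N t Y)"
  using assms
proof (induction rule: site_alg.induct)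
  case (site_alg_loc s X)
  then show ?case using loc_comm[of s N t Y X] by auto
next
  case site_alg_id
  then show ?case by (simp add: op_id_left op_id_right)
next
  case (site_alg_add A B)
  then show ?case by (simp add: op_mult_add_left op_mult_add_right)
next
  case (site_alg_mult A B)
  then show ?case by (metis op_mult_assoc)
next
  case (site_alg_smult A c)
  then show ?case by (simp add: op_mult_smult_left op_mult_smult_right)
qed simp

lemma site_alg_comm:
  assumes "B \<in> site_alg N T" "A \<in> site_alg N S" "S \<inter> T = {}"
  shows "op_mult N A B = op_mult N B A"
  using assms
proof (induction rule: site_alg.induct)
  case (site_alg_loc s X)
  then have "s \<notin> S" by blast
  with site_alg_loc show ?case using site_alg_comm_loc[of A N S s X] by simp
next
  case site_alg_id
  then show ?case using site_alg_on_states by (simp add: op_id_left op_id_right)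
next
  case (site_alg_add A B)
  then show ?case by (simp add: op_mult_add_left op_mult_add_right)
next
  case (site_alg_mult B1 B2)
  then show ?case by (metis op_mult_assoc)
next
  case (site_alg_smult A c)
  then show ?case by (simp add: op_mult_smult_left op_mult_smult_right)
qed simp


section \<open>Matrices over the auxiliary space\<close>

text \<open>Scalar 2x2 matrices, and 2x2 matrices of scalar 2x2 matrices (matrices on
  \<open>C^2 \<otimes> C^2\<close>).\<close>
type_synonym smat = "nat \<Rightarrow> nat \<Rightarrow> complex"
type_synonym lmat = "nat \<Rightarrow> nat \<Rightarrow> smat"

text \<open>Elements of \<open>End(C^2) \<otimes> End(R_N)\<close> are 2x2 matrices of operators; only the
  entries with indices below 2 matter, so they are compared by \<open>\<doteq>\<close>.\<close>
definition aeq :: "aop \<Rightarrow> aop \<Rightarrow> bool" (infix "\<doteq>" 50) where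
  "Z \<doteq> W \<longleftrightarrow> (\<forall>a<2. \<forall>b<2. Z a b = W a b)"

lemma aeq_refl [simp]: "Z \<doteq> Z" by (simp add: aeq_def)
lemma aeq_sym: "Z \<doteq> W \<Longrightarrow> W \<doteq> Z" by (simp add: aeq_def)
lemma aeq_trans [trans]: "Z \<doteq> W \<Longrightarrow> W \<doteq> V \<Longrightarrow> Z \<doteq> V" by (simp add: aeq_def)
lemma eq_aeq_trans [trans]: "Z = W \<Longrightarrow> W \<doteq> V \<Longrightarrow> Z \<doteq> V" by simp
lemma aeq_eq_trans [trans]: "Z \<doteq> W \<Longrightarrow> W = V \<Longrightarrow> Z \<doteq> V" by simp
lemma aeqD: "Z \<doteq> W \<Longrightarrow> a < 2 \<Longrightarrow> b < 2 \<Longrightarrow> Z a b = W a b" by (simp add: aeq_def)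
lemma aeqI: "(\<And>a b. a < 2 \<Longrightarrow> b < 2 \<Longrightarrow> Z a b = W a b) \<Longrightarrow> Z \<doteq> W" by (simp add: aeq_def)

lemma less2: "(a::nat) < 2 \<longleftrightarrow> a = 0 \<or> a = 1" by auto

lemma aux_mult_eq: "aux_mult N M P a c = op_mult N (M a 0) (P 0 c) + op_mult N (M a 1) (P 1 c)"
  by (simp add: aux_mult_def op_add_eq)

lemma aux_mult_cong: "Z \<doteq> Z' \<Longrightarrow> W \<doteq> W' \<Longrightarrow> aux_mult N Z W \<doteq> aux_mult N Z' W'"
  by (simp add: aeq_def aux_mult_eq)
lemma aux_mult_cong1: "Z \<doteq> Z' \<Longrightarrow> aux_mult N Z W \<doteq> aux_mult N Z' W"
  by (simp add: aux_mult_cong)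
lemma aux_mult_cong2: "W \<doteq> W' \<Longrightarrow> aux_mult N Z W \<doteq> aux_mult N Z W'"
  by (simp add: aux_mult_cong)

lemma aux_mult_assoc: "aux_mult N (aux_mult N A B) C = aux_mult N A (aux_mult N B C)"
  by (simp add: fun_eq_iff aux_mult_eq op_mult_add_left op_mult_add_right op_mult_assoc add_ac
      del: plus_fun_apply)

definition aux_id :: "nat \<Rightarrow> aop" where "aux_id N = aux_scalar N id2"

definition aux_const :: "nat \<Rightarrow> complex \<Rightarrow> aop" where
  "aux_const N k = aux_scalar N (\<lambda>a b. k * id2 a b)"

definition aux_smult :: "complex \<Rightarrow> aop \<Rightarrow> aop" where
  "aux_smult k Z = (\<lambda>a b. op_smult k (Z a b))"

definition aux_alg :: "nat \<Rightarrow> nat set \<Rightarrow> aop \<Rightarrow> bool" where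
  "aux_alg N S Z \<longleftrightarrow> (\<forall>a<2. \<forall>b<2. Z a b \<in> site_alg N S)"

definition aux_on_states :: "nat \<Rightarrow> aop \<Rightarrow> bool" where
  "aux_on_states N Z \<longleftrightarrow> (\<forall>a<2. \<forall>b<2. on_states N (Z a b))"

lemma aux_alg_on_states: "aux_alg N S Z \<Longrightarrow> aux_on_states N Z"
  by (auto simp: aux_alg_def aux_on_states_def intro: site_alg_on_states)

lemma aux_alg_mono: "aux_alg N S Z \<Longrightarrow> S \<subseteq> T \<Longrightarrow> aux_alg N T Z"
  by (auto simp: aux_alg_def intro: site_alg_mono)

lemma aux_alg_mult: "aux_alg N S Z \<Longrightarrow> aux_alg N S W \<Longrightarrow> aux_alg N S (aux_mult N Z W)"
  by (auto simp: aux_alg_def aux_mult_eq intro!: site_alg.intros)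

lemma aux_alg_scalar: "aux_alg N S (aux_scalar N X)"
  by (auto simp: aux_alg_def aux_scalar_def intro!: site_alg.intros)

lemma aux_alg_id: "aux_alg N S (aux_id N)"
  by (simp add: aux_id_def aux_alg_scalar)

lemma aux_mult_const_left: "aux_on_states N Z \<Longrightarrow> aux_mult N (aux_const N k) Z \<doteq> aux_smult k Z"
  by (auto simp: aeq_def aux_on_states_def aux_mult_eq aux_const_def aux_scalar_def aux_smult_def id2_def
      less2 op_mult_smult_left op_id_left)
lemma aux_mult_const_right: "aux_on_states N Z \<Longrightarrow> aux_mult N Z (aux_const N k) \<doteq> aux_smult k Z"
  by (auto simp: aeq_def aux_on_states_def aux_mult_eq aux_const_def aux_scalar_def aux_smult_def id2_def
      less2 op_mult_smult_right op_id_right)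

lemma aux_id_const: "aux_id N = aux_const N 1" by (simp add: aux_id_def aux_const_def)

lemma aux_mult_id_left: "aux_on_states N Z \<Longrightarrow> aux_mult N (aux_id N) Z \<doteq> Z"
  using aux_mult_const_left[of N Z 1] by (simp add: aux_id_const aux_smult_def)
lemma aux_mult_id_right: "aux_on_states N Z \<Longrightarrow> aux_mult N Z (aux_id N) \<doteq> Z"
  using aux_mult_const_right[of N Z 1] by (simp add: aux_id_const aux_smult_def)

lemma aux_mult_scalar: "aux_mult N (aux_scalar N X) (aux_scalar N Y) \<doteq> aux_scalar N (mat2_mult X Y)"
  by (auto simp: aeq_def aux_mult_eq aux_scalar_def mat2_mult_def op_mult_smult_left op_mult_smult_right
      op_id_left op_smult_smult op_smult_add_scalar mult.commute)

lemma aux_scalar_cong: "(\<And>a b. a < 2 \<Longrightarrow> b < 2 \<Longrightarrow> V a b = W a b) \<Longrightarrow> aux_scalar N V \<doteq> aux_scalar N W"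
  by (simp add: aeq_def aux_scalar_def)

lemma aux_scalar_neg: "aux_scalar N (\<lambda>a b. - V a b) = aux_smult (-1) (aux_scalar N V)"
  by (simp add: fun_eq_iff aux_scalar_def aux_smult_def op_smult_smult)

lemma aux_mult_smult_left: "aux_mult N (aux_smult k Z) W = aux_smult k (aux_mult N Z W)"
  by (simp add: fun_eq_iff aux_smult_def aux_mult_eq op_mult_smult_left op_smult_add del: plus_fun_apply)
lemma aux_mult_smult_right: "aux_mult N Z (aux_smult k W) = aux_smult k (aux_mult N Z W)"
  by (simp add: fun_eq_iff aux_smult_def aux_mult_eq op_mult_smult_right op_smult_add del: plus_fun_apply)
lemma aux_smult_cong: "Z \<doteq> W \<Longrightarrow> aux_smult k Z \<doteq> aux_smult k W"
  by (simp add: aeq_def aux_smult_def)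
lemma aux_smult_const: "aux_smult k (aux_const N l) = aux_const N (k * l)"
  by (simp add: fun_eq_iff aux_smult_def aux_const_def aux_scalar_def op_smult_smult mult.assoc)

lemma aux_on_states_const [simp]: "aux_on_states N (aux_const N k)"
  by (simp add: aux_on_states_def aux_const_def aux_scalar_def)
lemma aux_on_states_id [simp]: "aux_on_states N (aux_id N)"
  by (simp add: aux_on_states_def aux_id_def aux_scalar_def)
lemma aux_on_states_mult [simp]: "aux_on_states N Z \<Longrightarrow> aux_on_states N W \<Longrightarrow> aux_on_states N (aux_mult N Z W)"
  by (simp add: aux_on_states_def aux_mult_eq)

lemma ptrace_cong: "Z \<doteq> W \<Longrightarrow> ptrace Z = ptrace W"
  by (simp add: aeq_def ptrace_def)

lemma ptrace_smult: "ptrace (aux_smult k Z) = op_smult k (ptrace Z)"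
  by (simp add: ptrace_def aux_smult_def op_add_eq op_smult_add)

text \<open>The adjugate \<open>adj Z\<close> of a 2x2 matrix; \<open>Z adj Z = det Z\<close> when the entries commute,
  and the quantum determinant is the analogue \<open>M(\<lambda>) adj M(\<lambda>/q)\<close>.\<close>
definition adj :: "aop \<Rightarrow> aop" where
  "adj Z = (\<lambda>x y. if x = 0 \<and> y = 0 then Z 1 1 else if x = 0 \<and> y = 1 then - Z 0 1
     else if x = 1 \<and> y = 0 then - Z 1 0 else if x = 1 \<and> y = 1 then Z 0 0 else 0)"

definition adj2 :: "smat \<Rightarrow> smat" where
  "adj2 V = (\<lambda>x y. if x = 0 \<and> y = 0 then V 1 1 else if x = 0 \<and> y = 1 then - V 0 1
     else if x = 1 \<and> y = 0 then - V 1 0 else if x = 1 \<and> y = 1 then V 0 0 else 0)"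

lemma adj_cong: "Z \<doteq> W \<Longrightarrow> adj Z \<doteq> adj W"
  by (simp add: aeq_def adj_def)

lemma aux_on_states_adj [simp]: "aux_on_states N Z \<Longrightarrow> aux_on_states N (adj Z)"
  by (auto simp: aux_on_states_def adj_def)

lemma aux_alg_adj: "aux_alg N S Z \<Longrightarrow> aux_alg N S (adj Z)"
  by (auto simp: aux_alg_def adj_def less2 intro: site_alg_uminus)

lemma adj_scalar: "adj (aux_scalar N V) \<doteq> aux_scalar N (adj2 V)"
  by (auto simp: aeq_def adj_def aux_scalar_def adj2_def less2 op_smult_minus_scalar)

lemma adj_const: "adj (aux_const N k) \<doteq> aux_const N k"
  by (auto simp: aeq_def adj_def aux_const_def aux_scalar_def id2_def less2)

definition aux_commute :: "nat \<Rightarrow> aop \<Rightarrow> aop \<Rightarrow> bool" where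
  "aux_commute N A B \<longleftrightarrow> (\<forall>a<2. \<forall>b<2. \<forall>c<2. \<forall>d<2. op_mult N (A a b) (B c d) = op_mult N (B c d) (A a b))"

lemma aux_commute_disjoint: "aux_alg N S A \<Longrightarrow> aux_alg N T B \<Longrightarrow> S \<inter> T = {} \<Longrightarrow> aux_commute N A B"
  unfolding aux_commute_def aux_alg_def by (metis site_alg_comm)

lemma adj_mult: "aux_commute N A B \<Longrightarrow> adj (aux_mult N A B) \<doteq> aux_mult N (adj B) (adj A)"
  unfolding aux_commute_def
  by (auto simp: aeq_def adj_def aux_mult_eq less2 op_mult_uminus_left op_mult_uminus_right add.commute)

definition flip_sigx :: "smat \<Rightarrow> smat" where
  "flip_sigx X = (\<lambda>a b. sigz a a * sigz b b * mat2_mult X sigx b a)"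

lemma ptrace_transp:
  assumes "aux_on_states N M'"
  shows "ptrace (aux_mult N (aux_mult N (aux_mult N (aux_mult N (aux_scalar N sigz) (ptransp M'))
              (aux_scalar N sigz)) (aux_scalar N X)) (aux_scalar N sigx))
       = ptrace (aux_mult N M' (aux_scalar N (flip_sigx X)))"
  using assms
  by (simp add: flip_sigx_def ptrace_def aux_mult_eq aux_scalar_def ptransp_def aux_on_states_def op_add_eq
      op_mult_smult_left op_mult_smult_right op_id_left op_id_right op_mult_add_left op_mult_add_right
      sigz_def sigx_def mat2_mult_def op_smult_smult del: plus_fun_apply)

lemma ptrace_sigx_assoc:
  "ptrace (aux_mult N (aux_mult N M (aux_scalar N X)) (aux_scalar N sigx))
     = ptrace (aux_mult N M (aux_scalar N (mat2_mult X sigx)))"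
  by (simp add: aux_mult_assoc ptrace_cong aux_mult_cong2 aux_mult_scalar)

lemma ptrace_scalar:
  assumes "aux_on_states N M"
  shows "ptrace (aux_mult N M (aux_scalar N W)) = op_smult (W 0 0) (M 0 0) + op_smult (W 1 0) (M 0 1)
      + op_smult (W 0 1) (M 1 0) + op_smult (W 1 1) (M 1 1)"
  using assms by (simp add: ptrace_def aux_mult_eq aux_scalar_def op_add_eq op_mult_smult_id aux_on_states_def add_ac)


text \<open>\<open>aux_to_site N b Z = \<Sum>_{ij} Z_ij (E_ij)_b\<close> replaces the auxiliary space by site \<open>b\<close>.\<close>
definition aux_to_site :: "nat \<Rightarrow> nat \<Rightarrow> aop \<Rightarrow> cop" where
  "aux_to_site N b Z = op_mult N (Z 0 0) (loc N b (unit2 0 0)) + op_mult N (Z 0 1) (loc N b (unit2 0 1))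
             + op_mult N (Z 1 0) (loc N b (unit2 1 0)) + op_mult N (Z 1 1) (loc N b (unit2 1 1))"

lemma aux_to_site_cong: "Z \<doteq> W \<Longrightarrow> aux_to_site N b Z = aux_to_site N b W"
  by (simp add: aeq_def aux_to_site_def)

lemma loc_decomp:
  assumes b: "1 \<le> b" "b \<le> N"
  shows "loc N b X = op_smult (X 0 0) (loc N b (unit2 0 0)) + op_smult (X 0 1) (loc N b (unit2 0 1))
     + op_smult (X 1 0) (loc N b (unit2 1 0)) + op_smult (X 1 1) (loc N b (unit2 1 1))"
proof -
  have "loc N b X = loc N b (\<lambda>x y. X 0 0 * unit2 0 0 x y + X 0 1 * unit2 0 1 x y
                                  + X 1 0 * unit2 1 0 x y + X 1 1 * unit2 1 1 x y)"
    by (rule loc_cong[OF b]) (auto simp: unit2_def less2)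
  then show ?thesis by (simp only: loc_add loc_smult)
qed

lemma loc_unit2_mult:
  assumes b: "1 \<le> b" "b \<le> N" and "i < 2" "j < 2" "l < 2"
  shows "op_mult N (loc N b (unit2 i j)) (loc N b (unit2 k l)) = (if j = k then loc N b (unit2 i l) else 0)"
proof -
  have "loc N b (mat2_mult (unit2 i j) (unit2 k l)) = loc N b (if j = k then unit2 i l else (\<lambda>a b. 0))"
    by (rule loc_cong[OF b]) (use assms in \<open>auto simp: mat2_mult_def unit2_def\<close>)
  then show ?thesis by (simp add: loc_mult_same[OF b] loc_zero)
qed

lemma aux_to_site_mult:
  assumes W: "aux_alg N S W" and b: "b \<notin> S" "1 \<le> b" "b \<le> N"
  shows "aux_to_site N b (aux_mult N Z W) = op_mult N (aux_to_site N b Z) (aux_to_site N b W)"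
proof -
  have comm: "op_mult N (loc N b Y) (W k l) = op_mult N (W k l) (loc N b Y)" if "k < 2" "l < 2" for k l Y
    using site_alg_comm_loc[of "W k l" N S b Y] W b that by (auto simp: aux_alg_def)
  have move: "op_mult N (op_mult N A (loc N b (unit2 i j))) (op_mult N (W k l) (loc N b (unit2 k' l')))
      = op_mult N (op_mult N A (W k l)) (op_mult N (loc N b (unit2 i j)) (loc N b (unit2 k' l')))"
    if "k < 2" "l < 2" for A i j k l k' l'
  proof -
    have "op_mult N (op_mult N A (loc N b (unit2 i j))) (op_mult N (W k l) (loc N b (unit2 k' l')))
        = op_mult N A (op_mult N (op_mult N (loc N b (unit2 i j)) (W k l)) (loc N b (unit2 k' l')))"
      by (simp only: op_mult_assoc)
    then show ?thesis by (simp only: comm[OF that] op_mult_assoc)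
  qed
  show ?thesis
    unfolding aux_to_site_def
    by (simp add: aux_mult_eq op_mult_add_left op_mult_add_right move loc_unit2_mult[OF b(2,3)]
        del: plus_fun_apply)
qed

lemma aux_to_site_scalar:
  assumes b: "1 \<le> b" "b \<le> N"
  shows "aux_to_site N b (aux_scalar N X) = loc N b X"
  by (subst loc_decomp[OF b]) (simp add: aux_to_site_def aux_scalar_def op_mult_smult_left op_id_left)

lemma aux_to_site_site_alg:
  assumes "aux_alg N S Z" "1 \<le> b" "b \<le> N"
  shows "aux_to_site N b Z \<in> site_alg N (insert b S)"
proof -
  have z: "Z i j \<in> site_alg N (insert b S)" if "i < 2" "j < 2" for i j
    using assms that by (auto simp: aux_alg_def intro: site_alg_mono)
  have l: "loc N b Y \<in> site_alg N (insert b S)" for Y using assms by (auto intro: site_alg_loc)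
  show ?thesis unfolding aux_to_site_def by (intro site_alg_add site_alg_mult z l) auto
qed

lemma aux_to_site_smult: "aux_to_site N b (aux_smult k Z) = op_smult k (aux_to_site N b Z)"
  by (simp add: aux_to_site_def aux_smult_def op_mult_smult_left op_smult_add)

lemma aux_to_site_const: "1 \<le> b \<Longrightarrow> b \<le> N \<Longrightarrow> aux_to_site N b (aux_const N k) = op_smult k (op_id N)"
  by (simp add: aux_const_def aux_to_site_scalar loc_smult loc_id)


text \<open>A matrix \<open>F\<close> on \<open>C^2 \<otimes> C^2\<close> (four indices) read as an auxiliary matrix whose
  entries act on site \<open>n\<close>. Products and adjugates of such matrices are computed
  entrywise, which reduces the local Yang-Baxter algebra to finite computations.\<close>
definition site_aux :: "nat \<Rightarrow> nat \<Rightarrow> lmat \<Rightarrow> aop" where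
  "site_aux N n F = (\<lambda>a b. loc N n (F a b))"

definition lmat_mult :: "lmat \<Rightarrow> lmat \<Rightarrow> lmat" where
  "lmat_mult F G = (\<lambda>a b x y. F a 0 x 0 * G 0 b 0 y + F a 0 x 1 * G 0 b 1 y
                             + F a 1 x 0 * G 1 b 0 y + F a 1 x 1 * G 1 b 1 y)"

definition lmat_adj :: "lmat \<Rightarrow> lmat" where
  "lmat_adj F = (\<lambda>x y. if x = 0 \<and> y = 0 then F 1 1 else if x = 0 \<and> y = 1 then (\<lambda>i j. - F 0 1 i j)
     else if x = 1 \<and> y = 0 then (\<lambda>i j. - F 1 0 i j) else if x = 1 \<and> y = 1 then F 0 0 else (\<lambda>i j. 0))"

definition lmat_const :: "complex \<Rightarrow> lmat" where
  "lmat_const k = (\<lambda>a b x y. k * id2 a b * id2 x y)"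

definition lmat_eq :: "lmat \<Rightarrow> lmat \<Rightarrow> bool" where
  "lmat_eq F G \<longleftrightarrow> (\<forall>a<2. \<forall>b<2. \<forall>x<2. \<forall>y<2. F a b x y = G a b x y)"

lemma site_aux_mult:
  assumes n: "1 \<le> n" "n \<le> N"
  shows "aux_mult N (site_aux N n F) (site_aux N n G) = site_aux N n (lmat_mult F G)"
proof -
  have "loc N n (lmat_mult F G a b) = loc N n (\<lambda>x y. mat2_mult (F a 0) (G 0 b) x y + mat2_mult (F a 1) (G 1 b) x y)" for a b
    by (rule loc_cong[OF n]) (simp add: lmat_mult_def mat2_mult_def)
  then show ?thesis
    by (simp add: fun_eq_iff site_aux_def aux_mult_eq loc_mult_same[OF n] loc_add del: plus_fun_apply)
qed

lemma site_aux_adj: "adj (site_aux N n F) = site_aux N n (lmat_adj F)"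
  by (auto simp: fun_eq_iff adj_def site_aux_def lmat_adj_def loc_uminus loc_zero simp del: uminus_apply)

lemma site_aux_lmat_eq: "1 \<le> n \<Longrightarrow> n \<le> N \<Longrightarrow> lmat_eq F G \<Longrightarrow> site_aux N n F \<doteq> site_aux N n G"
  by (auto simp: aeq_def site_aux_def lmat_eq_def intro!: loc_cong)

lemma site_aux_const: "1 \<le> n \<Longrightarrow> n \<le> N \<Longrightarrow> site_aux N n (lmat_const k) \<doteq> aux_const N k"
  by (auto simp: aeq_def site_aux_def aux_const_def aux_scalar_def lmat_const_def loc_smult[symmetric]
      loc_id[symmetric] intro!: loc_cong)

lemma aux_alg_site_aux: "1 \<le> n \<Longrightarrow> n \<le> N \<Longrightarrow> aux_alg N {n} (site_aux N n F)"
  by (simp add: aux_alg_def site_aux_def site_alg_loc)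

lemma aux_to_site_site_aux_swap:
  assumes b: "1 \<le> b" "b \<le> N" and k: "1 \<le> k" "k \<le> N" and bk: "b \<noteq> k"
    and sym: "\<And>i j x y. i < 2 \<Longrightarrow> j < 2 \<Longrightarrow> x < 2 \<Longrightarrow> y < 2 \<Longrightarrow> F i j x y = F x y i j"
  shows "aux_to_site N k (site_aux N b F) = aux_to_site N b (site_aux N k F)"
proof -
  have cm: "op_mult N (loc N k X) (loc N b Y) = op_mult N (loc N b Y) (loc N k X)" for X Y
    using loc_comm[OF b k bk[symmetric]] by simp
  have s: "F 0 (Suc 0) 0 0 = F 0 0 0 (Suc 0)" "F (Suc 0) 0 0 0 = F 0 0 (Suc 0) 0"
    "F (Suc 0) (Suc 0) 0 0 = F 0 0 (Suc 0) (Suc 0)" "F (Suc 0) 0 0 (Suc 0) = F 0 (Suc 0) (Suc 0) 0"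
    "F (Suc 0) (Suc 0) 0 (Suc 0) = F 0 (Suc 0) (Suc 0) (Suc 0)"
    "F (Suc 0) (Suc 0) (Suc 0) 0 = F (Suc 0) 0 (Suc 0) (Suc 0)"
    by (auto intro: sym)
  show ?thesis
    unfolding aux_to_site_def site_aux_def
    by (simp add: loc_decomp[OF b, of "F _ _"] loc_decomp[OF k, of "F _ _"] op_mult_add_left op_mult_add_right
        op_mult_smult_left op_mult_smult_right cm s add_ac del: plus_fun_apply)
qed


section \<open>The Lax matrix and its local identities\<close>

text \<open>The Lax operator \<open>L_{0n}(u)\<close> as a matrix on \<open>C^2 \<otimes> C^2\<close>, in the normalisation
  obtained after expanding \<open>x\<^sub>\<plusminus>(u)\<close>.\<close>
definition lax_mat :: "complex \<Rightarrow> complex \<Rightarrow> lmat" where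
  "lax_mat q u = (\<lambda>a b x y.
     if a = 0 \<and> b = 0 then (if x = 0 \<and> y = 0 then u * q - inverse (q * u) else if x = 1 \<and> y = 1 then u - inverse u else 0)
     else if a = 0 \<and> b = 1 then (if x = 1 \<and> y = 0 then q - inverse q else 0)
     else if a = 1 \<and> b = 0 then (if x = 0 \<and> y = 1 then q - inverse q else 0)
     else if a = 1 \<and> b = 1 then (if x = 0 \<and> y = 0 then u - inverse u else if x = 1 \<and> y = 1 then u * q - inverse (q * u) else 0)
     else 0)"

lemma lax_site_aux:
  assumes n: "1 \<le> n" "n \<le> N"
  shows "lax N q n u \<doteq> site_aux N n (lax_mat q u)"
proof (rule aeqI)
  fix a b :: nat assume ab: "a < 2" "b < 2"
  have "loc N n (lax_mat q u 0 0) = loc N n (\<lambda>x y. xp q u * id2 x y + xm q u * sigz x y)"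
    by (rule loc_cong[OF n]) (auto simp: lax_mat_def id2_def sigz_def xp_def xm_def less2 field_simps)
  then have e00: "op_add (op_smult (xp q u) (op_id N)) (op_smult (xm q u) (loc N n sigz)) = loc N n (lax_mat q u 0 0)"
    by (simp add: op_add_eq loc_add loc_smult loc_id[OF n])
  have "loc N n (lax_mat q u 1 1) = loc N n (\<lambda>x y. xp q u * id2 x y - xm q u * sigz x y)"
    by (rule loc_cong[OF n]) (auto simp: lax_mat_def id2_def sigz_def xp_def xm_def less2 field_simps)
  then have e11: "op_diff (op_smult (xp q u) (op_id N)) (op_smult (xm q u) (loc N n sigz)) = loc N n (lax_mat q u 1 1)"
    by (simp add: op_diff_eq loc_diff loc_smult loc_id[OF n])
  have "loc N n (lax_mat q u 0 1) = loc N n (\<lambda>x y. (q - inverse q) * sigm x y)"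
    by (rule loc_cong[OF n]) (auto simp: lax_mat_def sigm_def less2)
  then have e01: "op_smult (q - inverse q) (loc N n sigm) = loc N n (lax_mat q u 0 1)"
    by (simp add: loc_smult)
  have "loc N n (lax_mat q u 1 0) = loc N n (\<lambda>x y. (q - inverse q) * sigp x y)"
    by (rule loc_cong[OF n]) (auto simp: lax_mat_def sigp_def less2)
  then have e10: "op_smult (q - inverse q) (loc N n sigp) = loc N n (lax_mat q u 1 0)"
    by (simp add: loc_smult)
  show "lax N q n u a b = site_aux N n (lax_mat q u) a b"
    using ab e00 e11 e01 e10 by (auto simp: lax_def site_aux_def less2)
qed

lemma aux_alg_lax: "1 \<le> n \<Longrightarrow> n \<le> N \<Longrightarrow> aux_alg N {n} (lax N q n u)"
  using lax_site_aux[of n N q u] aux_alg_site_aux[of n N "lax_mat q u"] by (simp add: aux_alg_def aeq_def)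

definition delta :: "complex \<Rightarrow> complex \<Rightarrow> complex" where
  "delta q u = (u * q - inverse (u * q)) * (u / q - q / u)"

definition rho :: "complex \<Rightarrow> complex \<Rightarrow> complex" where
  "rho q x = (q - inverse q)^2 - (x - inverse x)^2"

definition eps :: "nat \<Rightarrow> nat \<Rightarrow> complex" where
  "eps a b = (if a = 0 \<and> b = 1 then 1 else if a = 1 \<and> b = 0 then -1 else 0)"

lemma lax_mat_fusion:
  assumes "q \<noteq> 0" "u \<noteq> 0"
  shows "lmat_eq (lmat_mult (lax_mat q u) (lmat_adj (lax_mat q (u / q)))) (lmat_const (delta q u))"
  using assms unfolding lmat_eq_def
  by (auto simp: less2 lmat_mult_def lmat_adj_def lax_mat_def lmat_const_def id2_def delta_def field_simps)

lemma lax_mat_unitarity: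
  assumes "q \<noteq> 0" "x \<noteq> 0"
  shows "lmat_eq (lmat_mult (lax_mat q x) (lax_mat q (inverse x))) (lmat_const (rho q x))"
  using assms unfolding lmat_eq_def
  by (auto simp: less2 lmat_mult_def lax_mat_def lmat_const_def id2_def rho_def field_simps power2_eq_square)

text \<open>The Lax matrix is symmetric under exchanging auxiliary and quantum space; at the
  special points \<open>u = 1\<close> and \<open>u = 1/q\<close> it degenerates to the permutation and to
  \<open>\<epsilon> \<otimes> \<epsilon>\<close> respectively.\<close>
lemma lax_mat_swap: "a < 2 \<Longrightarrow> b < 2 \<Longrightarrow> x < 2 \<Longrightarrow> y < 2 \<Longrightarrow> lax_mat q u a b x y = lax_mat q u x y a b"
  by (auto simp: less2 lax_mat_def)

lemma lax_mat_one: "a < 2 \<Longrightarrow> b < 2 \<Longrightarrow> x < 2 \<Longrightarrow> y < 2 \<Longrightarrow> lax_mat q 1 a b x y = (q - inverse q) * unit2 b a x y"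
  by (auto simp: less2 lax_mat_def unit2_def)

lemma lax_mat_invq: "q \<noteq> 0 \<Longrightarrow> a < 2 \<Longrightarrow> b < 2 \<Longrightarrow> x < 2 \<Longrightarrow> y < 2 \<Longrightarrow>
    lax_mat q (inverse q) a b x y = - (q - inverse q) * (eps a x * eps b y)"
  by (auto simp: less2 lax_mat_def eps_def field_simps)

lemma aux_to_site_lax_swap:
  assumes b: "1 \<le> b" "b \<le> N" and k: "1 \<le> k" "k \<le> N" and bk: "b \<noteq> k"
  shows "aux_to_site N k (lax N q b y) = aux_to_site N b (lax N q k y)"
proof -
  have "aux_to_site N k (lax N q b y) = aux_to_site N k (site_aux N b (lax_mat q y))"
    by (rule aux_to_site_cong[OF lax_site_aux[OF b]])
  also have "\<dots> = aux_to_site N b (site_aux N k (lax_mat q y))"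
    by (rule aux_to_site_site_aux_swap[OF b k bk lax_mat_swap])
  also have "\<dots> = aux_to_site N b (lax N q k y)"
    by (rule aux_to_site_cong[OF aeq_sym[OF lax_site_aux[OF k]]])
  finally show ?thesis .
qed

lemma aux_to_site_lax_unitarity:
  assumes b: "1 \<le> b" "b \<le> N" and k: "1 \<le> k" "k \<le> N" and bk: "b \<noteq> k" and q: "q \<noteq> 0" and x: "x \<noteq> 0"
  shows "op_mult N (aux_to_site N b (lax N q k x)) (aux_to_site N k (lax N q b (inverse x))) = op_smult (rho q x) (op_id N)"
proof -
  have "op_mult N (aux_to_site N b (lax N q k x)) (aux_to_site N k (lax N q b (inverse x)))
      = op_mult N (aux_to_site N b (lax N q k x)) (aux_to_site N b (lax N q k (inverse x)))"
    by (simp add: aux_to_site_lax_swap[OF b k bk])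
  also have "\<dots> = aux_to_site N b (aux_mult N (lax N q k x) (lax N q k (inverse x)))"
    by (rule aux_to_site_mult[symmetric, OF aux_alg_lax[OF k]]) (use b bk in auto)
  also have "\<dots> = aux_to_site N b (site_aux N k (lmat_mult (lax_mat q x) (lax_mat q (inverse x))))"
    by (rule aux_to_site_cong) (simp add: site_aux_mult[OF k, symmetric] aux_mult_cong lax_site_aux[OF k])
  also have "\<dots> = aux_to_site N b (aux_const N (rho q x))"
    by (rule aux_to_site_cong) (meson aeq_trans site_aux_lmat_eq[OF k lax_mat_unitarity[OF q x]] site_aux_const[OF k])
  finally show ?thesis by (simp add: aux_to_site_const[OF b])
qed


section \<open>Fusion and the quantum determinant\<close>

text \<open>\<open>fusion N A A' k\<close>: \<open>A adj A' = k\<close>. The relation is multiplicative when the second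
  factors act on disjoint sites, so it propagates from Lax operators to monodromies.\<close>
definition fusion :: "nat \<Rightarrow> aop \<Rightarrow> aop \<Rightarrow> complex \<Rightarrow> bool" where
  "fusion N A A' k \<longleftrightarrow> aux_mult N A (adj A') \<doteq> aux_const N k"

lemma fusion_mult:
  assumes fA: "fusion N A A' kA" and fB: "fusion N B B' kB"
    and aA: "aux_on_states N A" and aA': "aux_alg N S A'" and aB': "aux_alg N T B'" and dj: "S \<inter> T = {}"
  shows "fusion N (aux_mult N A B) (aux_mult N A' B') (kA * kB)"
proof -
  have "aux_mult N (aux_mult N A B) (adj (aux_mult N A' B'))
      \<doteq> aux_mult N (aux_mult N A B) (aux_mult N (adj B') (adj A'))"
    by (rule aux_mult_cong2, rule adj_mult, rule aux_commute_disjoint[OF aA' aB' dj])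
  also have "\<dots> = aux_mult N A (aux_mult N (aux_mult N B (adj B')) (adj A'))"
    by (simp add: aux_mult_assoc)
  also have "\<dots> \<doteq> aux_mult N A (aux_mult N (aux_const N kB) (adj A'))"
    using fB unfolding fusion_def by (intro aux_mult_cong2 aux_mult_cong1)
  also have "\<dots> \<doteq> aux_mult N A (aux_smult kB (adj A'))"
    using aux_alg_on_states[OF aA'] by (intro aux_mult_cong2 aux_mult_const_left) simp
  also have "\<dots> = aux_smult kB (aux_mult N A (adj A'))"
    by (simp add: aux_mult_smult_right)
  also have "\<dots> \<doteq> aux_smult kB (aux_const N kA)"
    using fA unfolding fusion_def by (rule aux_smult_cong)
  also have "\<dots> = aux_const N (kA * kB)" by (simp add: aux_smult_const mult.commute)
  finally show ?thesis unfolding fusion_def .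
qed

lemma fusion_id: "fusion N (aux_id N) (aux_id N) 1"
proof -
  have "aux_mult N (aux_id N) (adj (aux_id N)) \<doteq> aux_mult N (aux_const N 1) (aux_const N 1)"
    unfolding aux_id_const by (intro aux_mult_cong2 adj_const)
  also have "\<dots> \<doteq> aux_smult 1 (aux_const N 1)" by (rule aux_mult_const_left) simp
  also have "\<dots> = aux_const N 1" by (simp add: aux_smult_const)
  finally show ?thesis by (simp add: fusion_def)
qed

lemma fusion_cong: "fusion N A A' k \<Longrightarrow> A \<doteq> B \<Longrightarrow> A' \<doteq> B' \<Longrightarrow> fusion N B B' k"
  unfolding fusion_def by (meson aeq_sym aeq_trans adj_cong aux_mult_cong)

lemma fusion_lax:
  assumes n: "1 \<le> n" "n \<le> N" and q: "q \<noteq> 0" and u: "u \<noteq> 0"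
  shows "fusion N (lax N q n u) (lax N q n (u / q)) (delta q u)"
proof -
  have "aux_mult N (site_aux N n (lax_mat q u)) (adj (site_aux N n (lax_mat q (u / q))))
      = site_aux N n (lmat_mult (lax_mat q u) (lmat_adj (lax_mat q (u / q))))"
    by (simp add: site_aux_adj site_aux_mult[OF n])
  also have "\<dots> \<doteq> site_aux N n (lmat_const (delta q u))"
    by (rule site_aux_lmat_eq[OF n lax_mat_fusion[OF q u]])
  also have "\<dots> \<doteq> aux_const N (delta q u)" by (rule site_aux_const[OF n])
  finally have "fusion N (site_aux N n (lax_mat q u)) (site_aux N n (lax_mat q (u / q))) (delta q u)"
    by (simp add: fusion_def)
  then show ?thesis
    by (rule fusion_cong) (use lax_site_aux[OF n] aeq_sym in blast)+
qed

text \<open>Partial monodromies \<open>mono_from m k l = L_{0k}(l/\<eta>_k) \<cdots> L_{0,m+1}(l/\<eta>_{m+1})\<close>;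
  the partial monodromy \<open>mono k\<close> of the definitions is the case \<open>m = 0\<close>.\<close>
primrec mono_from :: "nat \<Rightarrow> complex \<Rightarrow> (nat \<Rightarrow> complex) \<Rightarrow> nat \<Rightarrow> nat \<Rightarrow> complex \<Rightarrow> aop" where
  "mono_from N q eta m 0 l = aux_id N"
| "mono_from N q eta m (Suc k) l = (if Suc k \<le> m then aux_id N
     else aux_mult N (lax N q (Suc k) (l / eta (Suc k))) (mono_from N q eta m k l))"

lemma mono_from_0: "mono_from N q eta 0 k l = mono N q eta k l"
  by (induction k) (simp_all add: aux_id_def)

lemma mono_from_le: "k \<le> m \<Longrightarrow> mono_from N q eta m k l = aux_id N"
  by (cases k) auto

lemma aux_alg_mono_from: "k \<le> N \<Longrightarrow> aux_alg N {Suc m..k} (mono_from N q eta m k l)"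
proof (induction k)
  case 0 then show ?case by (simp add: aux_alg_id)
next
  case (Suc k)
  show ?case
  proof (cases "Suc k \<le> m")
    case True then show ?thesis by (simp add: aux_alg_id)
  next
    case False
    have "aux_alg N {Suc m..Suc k} (lax N q (Suc k) (l / eta (Suc k)))"
      by (rule aux_alg_mono[OF aux_alg_lax]) (use Suc.prems False in auto)
    moreover have "aux_alg N {Suc m..Suc k} (mono_from N q eta m k l)"
      using Suc by (auto intro: aux_alg_mono)
    ultimately show ?thesis using False by (simp add: aux_alg_mult)
  qed
qed

lemma aux_alg_mono_partial: "k \<le> N \<Longrightarrow> aux_alg N {1..k} (mono N q eta k l)"
  using aux_alg_mono_from[of k N 0 q eta l] by (simp add: mono_from_0)

lemma mono_split:
  assumes "m \<le> k" "k \<le> N"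
  shows "mono N q eta k l \<doteq> aux_mult N (mono_from N q eta m k l) (mono N q eta m l)"
  using assms
proof (induction k)
  case (Suc k)
  show ?case
  proof (cases "Suc k \<le> m")
    case True
    then have "m = Suc k" using Suc.prems by simp
    then show ?thesis
      using aux_mult_id_left aux_alg_on_states[OF aux_alg_mono_partial[of "Suc k" N q eta l]] Suc.prems
      by (simp add: aeq_sym)
  next
    case False
    then have "mono N q eta k l \<doteq> aux_mult N (mono_from N q eta m k l) (mono N q eta m l)"
      using Suc by simp
    then show ?thesis using False by (simp add: aux_mult_cong2 aux_mult_assoc)
  qed
qed (use aux_mult_id_left aux_alg_on_states[OF aux_alg_mono_partial[of 0 N q eta l]] in \<open>simp add: aeq_sym\<close>)

lemma mono_from_split:
  assumes "m < k" "k \<le> N"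
  shows "mono_from N q eta m k l \<doteq> aux_mult N (mono_from N q eta (Suc m) k l) (lax N q (Suc m) (l / eta (Suc m)))"
  using assms
proof (induction k)
  case (Suc k)
  show ?case
  proof (cases "k = m")
    case True
    have "aux_on_states N (lax N q (Suc m) (l / eta (Suc m)))"
      by (rule aux_alg_on_states[OF aux_alg_lax]) (use Suc.prems True in auto)
    then show ?thesis
      using True mono_from_le[of m m] aux_mult_id_right aux_mult_id_left
      by (simp add: aeq_sym) (meson aeq_sym aeq_trans)
  next
    case False
    then have "mono_from N q eta m k l
        \<doteq> aux_mult N (mono_from N q eta (Suc m) k l) (lax N q (Suc m) (l / eta (Suc m)))"
      using Suc by simp
    then show ?thesis using Suc.prems False by (simp add: aux_mult_cong2 aux_mult_assoc)
  qed
qed simp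

lemma fusion_mono_from:
  assumes k: "k \<le> N" and q: "q \<noteq> 0" and l: "l \<noteq> 0" and eta: "\<forall>j\<in>{1..N}. eta j \<noteq> 0"
  shows "fusion N (mono_from N q eta m k l) (mono_from N q eta m k (l / q)) (\<Prod>j=Suc m..k. delta q (l / eta j))"
  using k
proof (induction k)
  case 0 then show ?case using fusion_id by simp
next
  case (Suc k)
  show ?case
  proof (cases "Suc k \<le> m")
    case True then show ?thesis using fusion_id by simp
  next
    case False
    have e: "eta (Suc k) \<noteq> 0" using eta Suc.prems by auto
    have lax: "fusion N (lax N q (Suc k) (l / eta (Suc k))) (lax N q (Suc k) (l / q / eta (Suc k)))
        (delta q (l / eta (Suc k)))"
      using fusion_lax[of "Suc k" N q "l / eta (Suc k)"] Suc.prems q l e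
      by (simp add: divide_divide_eq_left mult.commute)
    have "fusion N (aux_mult N (lax N q (Suc k) (l / eta (Suc k))) (mono_from N q eta m k l))
       (aux_mult N (lax N q (Suc k) (l / q / eta (Suc k))) (mono_from N q eta m k (l / q)))
       (delta q (l / eta (Suc k)) * (\<Prod>j=Suc m..k. delta q (l / eta j)))"
      by (rule fusion_mult[OF lax Suc.IH _ aux_alg_lax[of "Suc k" N q] aux_alg_mono_from[of k N m q eta]])
         (use Suc.prems False aux_alg_on_states[OF aux_alg_lax[of "Suc k" N q]] in auto)
    moreover have "{Suc m..Suc k} = insert (Suc k) {Suc m..k}" using False by auto
    ultimately show ?thesis using False by (simp add: mult.commute)
  qed
qed

lemma fusion_mono:
  assumes "k \<le> N" "q \<noteq> 0" "l \<noteq> 0" "\<forall>j\<in>{1..N}. eta j \<noteq> 0"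
  shows "fusion N (mono N q eta k l) (mono N q eta k (l / q)) (\<Prod>j=1..k. delta q (l / eta j))"
  using fusion_mono_from[OF assms, of 0] by (simp add: mono_from_0)

text \<open>The quantum determinant is the \<open>(0,0)\<close> entry of \<open>M(l) adj M(l/q)\<close>, hence a scalar.\<close>
lemma qdet_formula:
  assumes q: "q \<noteq> 0" and l: "l \<noteq> 0" and eta: "\<forall>j\<in>{1..N}. eta j \<noteq> 0"
  shows "qdet N q eta l = op_smult (\<Prod>j=1..N. delta q (l / eta j)) (op_id N)"
proof -
  have qdet: "qdet N q eta l = aux_mult N (monodromy N q eta l) (adj (monodromy N q eta (l / q))) 0 0"
    by (simp add: qdet_def opA_def opB_def opC_def opD_def adj_def aux_mult_eq op_diff_eq op_mult_uminus_right)
  have "aux_mult N (monodromy N q eta l) (adj (monodromy N q eta (l / q)))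
      \<doteq> aux_const N (\<Prod>j=1..N. delta q (l / eta j))"
    using fusion_mono[OF le_refl q l eta] by (simp add: fusion_def monodromy_def)
  then show ?thesis unfolding qdet
    by (auto dest!: aeqD[of _ _ 0 0] simp: aux_const_def aux_scalar_def id2_def)
qed

lemma ad_prod:
  assumes q: "q \<noteq> 0" and l: "l \<noteq> 0" and eta: "\<forall>j\<in>{1..N}. eta j \<noteq> 0"
  shows "afun N q eta l * dfun N eta (l / q) = - (\<Prod>j=1..N. delta q (l / eta j))"
proof -
  have "(l * q / eta j - eta j / (l * q)) * (l / q / eta j - eta j / (l / q)) = delta q (l / eta j)"
    if "j \<in> {1..N}" for j
    using q l eta that by (auto simp: delta_def field_simps)
  then show ?thesis
    by (simp add: afun_def dfun_def prod.distrib[symmetric])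
qed


section \<open>The RTT relation and commutativity of the transfer matrix\<close>

definition rmat :: "complex \<Rightarrow> complex \<Rightarrow> nat \<Rightarrow> nat \<Rightarrow> nat \<Rightarrow> nat \<Rightarrow> complex" where
  "rmat q x a a' b b' = lax_mat q x a b a' b'"

lemma sum_2: "(\<Sum>b<(2::nat). f b) = f 0 + f 1"
  by (simp add: numeral_2_eq_2)

text \<open>\<open>rtt N q x P Q\<close> is the relation \<open>R_{12}(x) P_1 Q_2 = Q_2 P_1 R_{12}(x)\<close>, written in
  components.\<close>
definition rtt :: "nat \<Rightarrow> complex \<Rightarrow> complex \<Rightarrow> aop \<Rightarrow> aop \<Rightarrow> bool" where
  "rtt N q x P Q \<longleftrightarrow> (\<forall>a<2. \<forall>a'<2. \<forall>e<2. \<forall>e'<2.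
     (\<Sum>b<2. \<Sum>b'<2. op_smult (rmat q x a a' b b') (op_mult N (P b e) (Q b' e')))
   = (\<Sum>b<2. \<Sum>b'<2. op_smult (rmat q x b b' e e') (op_mult N (Q a' b') (P a b))))"

lemma rtt_cong: "rtt N q x P Q \<Longrightarrow> P \<doteq> P' \<Longrightarrow> Q \<doteq> Q' \<Longrightarrow> rtt N q x P' Q'"
  unfolding rtt_def aeq_def by (simp add: sum_2)

lemma rtt_lax_mat:
  assumes "q \<noteq> 0" "u \<noteq> 0" "v \<noteq> 0" "a < 2" "a' < 2" "e < 2" "e' < 2" "i < 2" "j < 2"
  shows "(\<Sum>b<2. \<Sum>b'<2. rmat q (u / v) a a' b b' * mat2_mult (lax_mat q u b e) (lax_mat q v b' e') i j)
       = (\<Sum>b<2. \<Sum>b'<2. rmat q (u / v) b b' e e' * mat2_mult (lax_mat q v a' b') (lax_mat q u a b) i j)"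
  using assms unfolding less2
  by (auto simp: rmat_def mat2_mult_def lax_mat_def numeral_2_eq_2 lessThan_Suc field_simps)

lemma rtt_lax:
  assumes n: "1 \<le> n" "n \<le> N" and q: "q \<noteq> 0" and u: "u \<noteq> 0" and v: "v \<noteq> 0"
  shows "rtt N q (u / v) (lax N q n u) (lax N q n v)"
proof -
  have "rtt N q (u / v) (site_aux N n (lax_mat q u)) (site_aux N n (lax_mat q v))"
    unfolding rtt_def
  proof (intro allI impI)
    fix a a' e e' :: nat assume h: "a < 2" "a' < 2" "e < 2" "e' < 2"
    have "(\<Sum>b<2. \<Sum>b'<2. op_smult (rmat q (u/v) a a' b b')
            (op_mult N (site_aux N n (lax_mat q u) b e) (site_aux N n (lax_mat q v) b' e')))
      = loc N n (\<lambda>i j. \<Sum>b<2. \<Sum>b'<2. rmat q (u / v) a a' b b' * mat2_mult (lax_mat q u b e) (lax_mat q v b' e') i j)"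
      by (simp add: site_aux_def loc_mult_same[OF n] loc_smult[symmetric] loc_sum)
    also have "\<dots> = loc N n (\<lambda>i j. \<Sum>b<2. \<Sum>b'<2. rmat q (u / v) b b' e e' * mat2_mult (lax_mat q v a' b') (lax_mat q u a b) i j)"
      by (rule loc_cong[OF n]) (rule rtt_lax_mat[OF q u v h])
    also have "\<dots> = (\<Sum>b<2. \<Sum>b'<2. op_smult (rmat q (u/v) b b' e e')
            (op_mult N (site_aux N n (lax_mat q v) a' b') (site_aux N n (lax_mat q u) a b)))"
      by (simp add: site_aux_def loc_mult_same[OF n] loc_smult[symmetric] loc_sum)
    finally show "(\<Sum>b<2. \<Sum>b'<2. op_smult (rmat q (u/v) a a' b b')
            (op_mult N (site_aux N n (lax_mat q u) b e) (site_aux N n (lax_mat q v) b' e')))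
      = (\<Sum>b<2. \<Sum>b'<2. op_smult (rmat q (u/v) b b' e e')
            (op_mult N (site_aux N n (lax_mat q v) a' b') (site_aux N n (lax_mat q u) a b)))" .
  qed
  then show ?thesis by (rule rtt_cong) (use lax_site_aux[OF n] aeq_sym in blast)+
qed

lemma op_mult_left_commute:
  "op_mult N A B = op_mult N B A \<Longrightarrow> op_mult N A (op_mult N B Z) = op_mult N B (op_mult N A Z)"
  by (metis op_mult_assoc)

lemma rtt_mult:
  assumes PQ: "rtt N q x P Q" and PQ': "rtt N q x P' Q'"
    and c1: "aux_commute N P' Q" and c2: "aux_commute N P Q'"
  shows "rtt N q x (aux_mult N P P') (aux_mult N Q Q')"
  unfolding rtt_def
proof (intro allI impI)
  fix a a' e e' :: nat assume h: "a < 2" "a' < 2" "e < 2" "e' < 2"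
  let ?r = "rmat q x"
  have C1: "op_mult N (P' i j) (Q k l) = op_mult N (Q k l) (P' i j)"
      "op_mult N (P' i j) (op_mult N (Q k l) Z) = op_mult N (Q k l) (op_mult N (P' i j) Z)"
    if "i < 2" "j < 2" "k < 2" "l < 2" for i j k l Z
    using c1 that op_mult_left_commute by (auto simp: aux_commute_def)
  have C2: "op_mult N (P i j) (Q' k l) = op_mult N (Q' k l) (P i j)"
      "op_mult N (P i j) (op_mult N (Q' k l) Z) = op_mult N (Q' k l) (op_mult N (P i j) Z)"
    if "i < 2" "j < 2" "k < 2" "l < 2" for i j k l Z
    using c2 that op_mult_left_commute by (auto simp: aux_commute_def)
  have rPQ: "(\<Sum>b<2. \<Sum>b'<2. op_smult (?r a a' b b') (op_mult N (P b f) (Q b' f')))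
      = (\<Sum>b<2. \<Sum>b'<2. op_smult (?r b b' f f') (op_mult N (Q a' b') (P a b)))" if "f < 2" "f' < 2" for f f'
    using PQ h that by (simp add: rtt_def)
  have rPQ': "(\<Sum>f<2. \<Sum>f'<2. op_smult (?r b b' f f') (op_mult N (P' f e) (Q' f' e')))
      = (\<Sum>d<2. \<Sum>d'<2. op_smult (?r d d' e e') (op_mult N (Q' b' d') (P' b d)))" if "b < 2" "b' < 2" for b b'
    using PQ' h that by (simp add: rtt_def)
  have "(\<Sum>b<2. \<Sum>b'<2. op_smult (?r a a' b b') (op_mult N (aux_mult N P P' b e) (aux_mult N Q Q' b' e')))
     = (\<Sum>f<2. \<Sum>f'<2. op_mult N (\<Sum>b<2. \<Sum>b'<2. op_smult (?r a a' b b') (op_mult N (P b f) (Q b' f')))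
                                     (op_mult N (P' f e) (Q' f' e')))"
    using h by (simp add: sum_2 aux_mult_eq op_mult_add_left op_mult_add_right op_mult_smult_left
        op_mult_smult_right op_smult_add op_mult_assoc C1 add_ac del: plus_fun_apply)
  also have "\<dots> = (\<Sum>f<2. \<Sum>f'<2. op_mult N (\<Sum>b<2. \<Sum>b'<2. op_smult (?r b b' f f') (op_mult N (Q a' b') (P a b)))
                                     (op_mult N (P' f e) (Q' f' e')))"
    by (intro sum.cong refl) (simp add: rPQ)
  also have "\<dots> = (\<Sum>b<2. \<Sum>b'<2. op_mult N (op_mult N (Q a' b') (P a b))
                     (\<Sum>f<2. \<Sum>f'<2. op_smult (?r b b' f f') (op_mult N (P' f e) (Q' f' e'))))"
    by (simp add: sum_2 op_mult_add_left op_mult_add_right op_mult_smult_left op_mult_smult_right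
        op_smult_add op_mult_assoc add_ac del: plus_fun_apply)
  also have "\<dots> = (\<Sum>b<2. \<Sum>b'<2. op_mult N (op_mult N (Q a' b') (P a b))
                     (\<Sum>d<2. \<Sum>d'<2. op_smult (?r d d' e e') (op_mult N (Q' b' d') (P' b d))))"
    by (intro sum.cong refl) (simp add: rPQ')
  also have "\<dots> = (\<Sum>d<2. \<Sum>d'<2. op_smult (?r d d' e e') (op_mult N (aux_mult N Q Q' a' d') (aux_mult N P P' a d)))"
    using h by (simp add: sum_2 aux_mult_eq op_mult_add_left op_mult_add_right op_mult_smult_left
        op_mult_smult_right op_smult_add op_mult_assoc C2 add_ac del: plus_fun_apply)
  finally show "(\<Sum>b<2. \<Sum>b'<2. op_smult (?r a a' b b') (op_mult N (aux_mult N P P' b e) (aux_mult N Q Q' b' e')))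
     = (\<Sum>b<2. \<Sum>b'<2. op_smult (?r b b' e e') (op_mult N (aux_mult N Q Q' a' b') (aux_mult N P P' a b)))" .
qed

lemma rtt_id: "rtt N q x (aux_id N) (aux_id N)"
  unfolding rtt_def
  by (auto simp: sum_2 aux_id_def aux_scalar_def id2_def less2 op_mult_smult_left op_mult_smult_right op_id_left
      op_smult_smult mult.commute)

lemma rtt_mono:
  assumes k: "k \<le> N" and q: "q \<noteq> 0" and l: "l \<noteq> 0" and m: "m \<noteq> 0" and eta: "\<forall>j\<in>{1..N}. eta j \<noteq> 0"
  shows "rtt N q (l / m) (mono N q eta k l) (mono N q eta k m)"
  using k
proof (induction k)
  case 0 then show ?case using rtt_id by (simp add: aux_id_def)
next
  case (Suc k)
  have e: "eta (Suc k) \<noteq> 0" using eta Suc.prems by auto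
  have lax: "rtt N q (l / m) (lax N q (Suc k) (l / eta (Suc k))) (lax N q (Suc k) (m / eta (Suc k)))"
    using rtt_lax[of "Suc k" N q "l / eta (Suc k)" "m / eta (Suc k)"] Suc.prems q l m e by simp
  have c1: "aux_commute N (mono N q eta k l) (lax N q (Suc k) (m / eta (Suc k)))"
    by (rule aux_commute_disjoint[OF aux_alg_mono_partial aux_alg_lax]) (use Suc.prems in auto)
  have c2: "aux_commute N (lax N q (Suc k) (l / eta (Suc k))) (mono N q eta k m)"
    using aux_commute_disjoint[OF aux_alg_mono_partial[of k N q eta m] aux_alg_lax[of "Suc k" N q "l / eta (Suc k)"]]
      Suc.prems
    by (auto simp: aux_commute_def)
  show ?case using rtt_mult[OF lax Suc.IH c1 c2] Suc.prems by simp
qed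

lemma rtt_components:
  assumes r: "rtt N q x P Q"
  defines "\<alpha> \<equiv> x * q - inverse (q * x)" and "\<beta> \<equiv> x - inverse x" and "\<gamma> \<equiv> q - inverse q"
  shows "\<alpha> * op_mult N (P 0 1) (Q 0 1) i j = \<alpha> * op_mult N (Q 0 1) (P 0 1) i j"
    and "\<alpha> * op_mult N (P 1 0) (Q 1 0) i j = \<alpha> * op_mult N (Q 1 0) (P 1 0) i j"
    and "\<beta> * op_mult N (P 0 0) (Q 1 1) i j + \<gamma> * op_mult N (P 1 0) (Q 0 1) i j
      = \<beta> * op_mult N (Q 1 1) (P 0 0) i j + \<gamma> * op_mult N (Q 1 0) (P 0 1) i j"
    and "\<beta> * op_mult N (P 1 1) (Q 0 0) i j + \<gamma> * op_mult N (P 0 1) (Q 1 0) i j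
      = \<beta> * op_mult N (Q 0 0) (P 1 1) i j + \<gamma> * op_mult N (Q 0 1) (P 1 0) i j"
    and "\<beta> * op_mult N (P 0 1) (Q 1 0) i j + \<gamma> * op_mult N (P 1 1) (Q 0 0) i j
      = \<beta> * op_mult N (Q 1 0) (P 0 1) i j + \<gamma> * op_mult N (Q 1 1) (P 0 0) i j"
    and "\<beta> * op_mult N (P 1 0) (Q 0 1) i j + \<gamma> * op_mult N (P 0 0) (Q 1 1) i j
      = \<beta> * op_mult N (Q 0 1) (P 1 0) i j + \<gamma> * op_mult N (Q 0 0) (P 1 1) i j"
proof -
  have E: "\<And>a a' e e'. a < 2 \<Longrightarrow> a' < 2 \<Longrightarrow> e < 2 \<Longrightarrow> e' < 2 \<Longrightarrow>
     (\<Sum>b<2. \<Sum>b'<2. op_smult (rmat q x a a' b b') (op_mult N (P b e) (Q b' e'))) i j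
   = (\<Sum>b<2. \<Sum>b'<2. op_smult (rmat q x b b' e e') (op_mult N (Q a' b') (P a b))) i j"
    using r unfolding rtt_def by simp
  note E' = E[simplified sum_2 rmat_def lax_mat_def op_smult_def plus_fun_apply, simplified]
  show "\<alpha> * op_mult N (P 0 1) (Q 0 1) i j = \<alpha> * op_mult N (Q 0 1) (P 0 1) i j"
    using E'[of 0 0 1 1] by (simp add: \<alpha>_def)
  show "\<alpha> * op_mult N (P 1 0) (Q 1 0) i j = \<alpha> * op_mult N (Q 1 0) (P 1 0) i j"
    using E'[of 1 1 0 0] by (simp add: \<alpha>_def algebra_simps)
  show "\<beta> * op_mult N (P 0 0) (Q 1 1) i j + \<gamma> * op_mult N (P 1 0) (Q 0 1) i j
      = \<beta> * op_mult N (Q 1 1) (P 0 0) i j + \<gamma> * op_mult N (Q 1 0) (P 0 1) i j"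
    using E'[of 0 1 0 1] by (simp add: \<beta>_def \<gamma>_def algebra_simps)
  show "\<beta> * op_mult N (P 1 1) (Q 0 0) i j + \<gamma> * op_mult N (P 0 1) (Q 1 0) i j
      = \<beta> * op_mult N (Q 0 0) (P 1 1) i j + \<gamma> * op_mult N (Q 0 1) (P 1 0) i j"
    using E'[of 1 0 1 0] by (simp add: \<beta>_def \<gamma>_def algebra_simps)
  show "\<beta> * op_mult N (P 0 1) (Q 1 0) i j + \<gamma> * op_mult N (P 1 1) (Q 0 0) i j
      = \<beta> * op_mult N (Q 1 0) (P 0 1) i j + \<gamma> * op_mult N (Q 1 1) (P 0 0) i j"
    using E'[of 0 1 1 0] by (simp add: \<beta>_def \<gamma>_def algebra_simps)
  show "\<beta> * op_mult N (P 1 0) (Q 0 1) i j + \<gamma> * op_mult N (P 0 0) (Q 1 1) i j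
      = \<beta> * op_mult N (Q 0 1) (P 1 0) i j + \<gamma> * op_mult N (Q 0 0) (P 1 1) i j"
    using E'[of 1 0 0 1] by (simp add: \<beta>_def \<gamma>_def algebra_simps)
qed

lemma rtt_commute_BC:
  assumes r: "rtt N q x P Q"
    and al: "x * q - inverse (q * x) \<noteq> 0"
    and be: "(x - inverse x) * (x - inverse x) \<noteq> (q - inverse q) * (q - inverse q)"
  shows "op_mult N (P 0 1 + P 1 0) (Q 0 1 + Q 1 0) = op_mult N (Q 0 1 + Q 1 0) (P 0 1 + P 1 0)"
proof (intro ext)
  fix i j
  let ?\<beta> = "x - inverse x" and ?\<gamma> = "q - inverse q"
  note h = rtt_components[OF r, of i j]
  have d1: "op_mult N (P 0 1) (Q 0 1) i j = op_mult N (Q 0 1) (P 0 1) i j" using h(1) al by simp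
  have d2: "op_mult N (P 1 0) (Q 1 0) i j = op_mult N (Q 1 0) (P 1 0) i j" using h(2) al by simp
  have "(?\<beta> * ?\<beta> - ?\<gamma> * ?\<gamma>) * (op_mult N (P 0 1) (Q 1 0) i j + op_mult N (P 1 0) (Q 0 1) i j
       - op_mult N (Q 1 0) (P 0 1) i j - op_mult N (Q 0 1) (P 1 0) i j) = 0"
    using h(3-6) by algebra
  with be have "op_mult N (P 0 1) (Q 1 0) i j + op_mult N (P 1 0) (Q 0 1) i j
       - op_mult N (Q 1 0) (P 0 1) i j - op_mult N (Q 0 1) (P 1 0) i j = 0"
    by simp
  then have d3: "op_mult N (P 0 1) (Q 1 0) i j + op_mult N (P 1 0) (Q 0 1) i j
       = op_mult N (Q 1 0) (P 0 1) i j + op_mult N (Q 0 1) (P 1 0) i j"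
    by (simp add: algebra_simps)
  show "op_mult N (P 0 1 + P 1 0) (Q 0 1 + Q 1 0) i j = op_mult N (Q 0 1 + Q 1 0) (P 0 1 + P 1 0) i j"
    using d1 d2 d3 by (simp add: op_mult_add_left op_mult_add_right del: plus_fun_apply) (simp add: algebra_simps)
qed


section \<open>The monodromy at the special points\<close>

text \<open>At \<open>u = 1\<close> the Lax operator is \<open>(q - q\<^sup>-\<^sup>1)\<close> times the permutation \<open>P_{0n}\<close>; at
  \<open>u = 1/q\<close> it is \<open>-(q - q\<^sup>-\<^sup>1)\<close> times the rank-one operator \<open>flip_aux\<close>, the
  "adjugated permutation".\<close>
definition qdiff :: "complex \<Rightarrow> complex" where "qdiff q = q - inverse q"

definition perm_aux :: "nat \<Rightarrow> nat \<Rightarrow> aop" where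
  "perm_aux N n = (\<lambda>a b. loc N n (unit2 b a))"

definition flip_aux :: "nat \<Rightarrow> nat \<Rightarrow> aop" where
  "flip_aux N n = (\<lambda>a b. if a = 0 \<and> b = 0 then loc N n (unit2 1 1) else if a = 0 \<and> b = 1 then - loc N n (unit2 1 0)
     else if a = 1 \<and> b = 0 then - loc N n (unit2 0 1) else if a = 1 \<and> b = 1 then loc N n (unit2 0 0) else 0)"

lemma lax_one:
  assumes n: "1 \<le> n" "n \<le> N"
  shows "lax N q n 1 \<doteq> aux_smult (qdiff q) (perm_aux N n)"
proof -
  have "site_aux N n (lax_mat q 1) \<doteq> aux_smult (qdiff q) (perm_aux N n)"
  proof (rule aeqI)
    fix a b :: nat assume ab: "a < 2" "b < 2"
    have "loc N n (lax_mat q 1 a b) = loc N n (\<lambda>x y. qdiff q * unit2 b a x y)"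
      by (rule loc_cong[OF n]) (use ab lax_mat_one in \<open>auto simp: qdiff_def\<close>)
    then show "site_aux N n (lax_mat q 1) a b = aux_smult (qdiff q) (perm_aux N n) a b"
      by (simp add: site_aux_def aux_smult_def perm_aux_def loc_smult)
  qed
  then show ?thesis using lax_site_aux[OF n] aeq_trans by blast
qed

lemma lax_invq:
  assumes n: "1 \<le> n" "n \<le> N" and q: "q \<noteq> 0"
  shows "lax N q n (inverse q) \<doteq> aux_smult (- qdiff q) (flip_aux N n)"
proof -
  have "site_aux N n (lax_mat q (inverse q)) \<doteq> aux_smult (- qdiff q) (flip_aux N n)"
  proof (rule aeqI)
    fix a b :: nat assume ab: "a < 2" "b < 2"
    have e: "loc N n (lax_mat q (inverse q) a b) = loc N n (\<lambda>x y. - qdiff q * (eps a x * eps b y))"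
      by (rule loc_cong[OF n]) (use ab lax_mat_invq[OF q] in \<open>auto simp: qdiff_def\<close>)
    have "loc N n (\<lambda>x y. eps a x * eps b y) = flip_aux N n a b"
      using ab unfolding less2
      by (auto simp: flip_aux_def eps_def loc_uminus[symmetric] intro!: loc_cong[OF n]; auto simp: unit2_def less2)
    then have "loc N n (\<lambda>x y. - qdiff q * (eps a x * eps b y)) = op_smult (- qdiff q) (flip_aux N n a b)"
      using loc_smult[of N n "- qdiff q" "\<lambda>x y. eps a x * eps b y"] by simp
    then show "site_aux N n (lax_mat q (inverse q)) a b = aux_smult (- qdiff q) (flip_aux N n) a b"
      by (simp add: site_aux_def aux_smult_def e)
  qed
  then show ?thesis using lax_site_aux[OF n] aeq_trans by blast
qed

lemma op_mult_rotate:
  assumes A: "A \<in> site_alg N S" and B: "B \<in> site_alg N T" and dj: "S \<inter> T = {}"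
    and nT: "n \<notin> T" and n: "1 \<le> n" "n \<le> N"
  shows "op_mult N A (op_mult N (loc N n Y) B) = op_mult N (op_mult N B A) (loc N n Y)"
proof -
  have "op_mult N (loc N n Y) B = op_mult N B (loc N n Y)"
    by (rule site_alg_comm_loc[OF B nT n])
  moreover have "op_mult N A B = op_mult N B A" by (rule site_alg_comm[OF B A dj])
  ultimately show ?thesis by (metis op_mult_assoc)
qed

lemma ptrace_perm:
  assumes A: "aux_alg N S A" and B: "aux_alg N T B" and dj: "S \<inter> T = {}" and nT: "n \<notin> T"
    and n: "1 \<le> n" "n \<le> N"
  shows "ptrace (aux_mult N A (aux_mult N (perm_aux N n) B)) = aux_to_site N n (aux_mult N B A)"
proof -
  have k: "op_mult N (A a i) (op_mult N (loc N n Y) (B j a')) = op_mult N (op_mult N (B j a') (A a i)) (loc N n Y)"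
    if "j < 2" "a < 2" "i < 2" "a' < 2" for Y a i j a'
    using A B that by (intro op_mult_rotate[OF _ _ dj nT n]) (auto simp: aux_alg_def)
  show ?thesis
    by (simp add: ptrace_def aux_to_site_def aux_mult_eq op_add_eq perm_aux_def op_mult_add_left
        op_mult_add_right k add_ac del: plus_fun_apply)
qed

lemma ptrace_flip:
  assumes A: "aux_alg N S A" and B: "aux_alg N T B" and dj: "S \<inter> T = {}" and nT: "n \<notin> T"
    and n: "1 \<le> n" "n \<le> N"
  shows "ptrace (aux_mult N A (aux_mult N (flip_aux N n) B)) = aux_to_site N n (adj (aux_mult N B A))"
proof -
  have k: "op_mult N (A a i) (op_mult N (loc N n Y) (B j a')) = op_mult N (op_mult N (B j a') (A a i)) (loc N n Y)"
    if "j < 2" "a < 2" "i < 2" "a' < 2" for Y a i j a'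
    using A B that by (intro op_mult_rotate[OF _ _ dj nT n]) (auto simp: aux_alg_def)
  have k2: "op_mult N (A a i) (op_mult N (- loc N n Y) (B j a')) = - op_mult N (op_mult N (B j a') (A a i)) (loc N n Y)"
    if "j < 2" "a < 2" "i < 2" "a' < 2" for Y a i j a'
    using that by (simp add: op_mult_uminus_left op_mult_uminus_right k)
  show ?thesis
    by (simp add: ptrace_def aux_to_site_def aux_mult_eq op_add_eq flip_aux_def adj_def op_mult_add_left
        op_mult_add_right k k2 op_mult_uminus_left op_mult_diff_left op_mult_diff_right algebra_simps
        del: plus_fun_apply)
qed

lemma Tbar_ptrace:
  "aux_on_states N (monodromy N q eta l) \<Longrightarrow> Tbar N q eta l = ptrace (aux_mult N (monodromy N q eta l) (aux_scalar N sigx))"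
  by (simp add: ptrace_scalar Tbar_def opB_def opC_def op_add_eq sigx_def add.commute)

lemma delta_one: "q \<noteq> 0 \<Longrightarrow> delta q 1 = - (qdiff q * qdiff q)"
  by (simp add: delta_def qdiff_def field_simps power2_eq_square)

lemma prod_split3:
  assumes "1 \<le> b" "b \<le> N"
  shows "(\<Prod>j=1..N. f j) = (\<Prod>j=1..b-1. f j) * f b * (\<Prod>j=Suc b..N. f j)"
proof -
  have d: "{1..N} = {1..b-1} \<union> insert b {Suc b..N}" using assms by auto
  have "(\<Prod>j\<in>{1..b-1} \<union> insert b {Suc b..N}. f j) = (\<Prod>j=1..b-1. f j) * (\<Prod>j\<in>insert b {Suc b..N}. f j)"
    by (rule prod.union_disjoint) auto
  also have "(\<Prod>j\<in>insert b {Suc b..N}. f j) = f b * (\<Prod>j=Suc b..N. f j)" by simp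
  finally show ?thesis unfolding d by (simp add: mult.assoc)
qed


locale spin_chain =
  fixes N :: nat and q :: complex and eta :: "nat \<Rightarrow> complex"
  assumes q: "q \<noteq> 0" and eta: "\<forall>j\<in>{1..N}. eta j \<noteq> 0"
begin

text \<open>\<open>M(l) = upper_b(l) L_{0b}(l/\<eta>_b) lower_b(l)\<close>, where \<open>lower_b\<close> collects the Lax
  operators of the sites \<open>< b\<close> and \<open>upper_b\<close> those of the sites \<open>> b\<close>.\<close>
abbreviation "M l \<equiv> monodromy N q eta l"
abbreviation "lower b l \<equiv> mono N q eta (b - 1) l"
abbreviation "upper b l \<equiv> mono_from N q eta b N l"
abbreviation "T l \<equiv> Tbar N q eta l"

lemma aux_on_states_M: "aux_on_states N (M l)"
  using aux_alg_on_states[OF aux_alg_mono_partial[of N N q eta l]] by (simp add: monodromy_def)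

lemma on_states_T: "on_states N (T l)"
  using aux_on_states_M[of l] by (simp add: Tbar_def opB_def opC_def op_add_eq aux_on_states_def)

lemma aux_alg_lower: "b \<le> N \<Longrightarrow> aux_alg N {1..b-1} (lower b l)"
  by (rule aux_alg_mono_partial) simp

lemma aux_alg_upper: "aux_alg N {Suc b..N} (upper b l)"
  by (rule aux_alg_mono_from) simp

lemma mono_decomp:
  assumes b: "1 \<le> b" "b \<le> N"
  shows "M l \<doteq> aux_mult N (upper b l) (aux_mult N (lax N q b (l / eta b)) (lower b l))"
proof -
  have "M l \<doteq> aux_mult N (upper b l) (mono N q eta b l)"
    unfolding monodromy_def by (rule mono_split) (use b in auto)
  moreover have "mono N q eta b l = aux_mult N (lax N q b (l / eta b)) (lower b l)"
    using b by (cases b) auto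
  ultimately show ?thesis by simp
qed

text \<open>The monodromy with site \<open>b\<close> removed, cyclically rotated, and with the scalar
  matrix \<open>W\<close> inserted: \<open>lower_b(l) W upper_b(l)\<close>.\<close>
definition cut_mono :: "nat \<Rightarrow> complex \<Rightarrow> smat \<Rightarrow> aop" where
  "cut_mono b l W = aux_mult N (aux_mult N (lower b l) (aux_scalar N W)) (upper b l)"

lemma aux_alg_lower_scalar: "b \<le> N \<Longrightarrow> aux_alg N {1..b-1} (aux_mult N (lower b l) (aux_scalar N W))"
  by (intro aux_alg_mult aux_alg_lower aux_alg_scalar)

lemma aux_alg_cut_mono: "b \<le> N \<Longrightarrow> aux_alg N ({1..b-1} \<union> {Suc b..N}) (cut_mono b l W)"
  unfolding cut_mono_def
  by (intro aux_alg_mult aux_alg_mono[OF aux_alg_lower_scalar] aux_alg_mono[OF aux_alg_upper]) auto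

lemma ptrace_through_site:
  assumes b: "1 \<le> b" "b \<le> N" and Z: "lax N q b (l / eta b) \<doteq> aux_smult c Z"
  shows "ptrace (aux_mult N (M l) (aux_scalar N W))
       = op_smult c (ptrace (aux_mult N (upper b l) (aux_mult N Z (aux_mult N (lower b l) (aux_scalar N W)))))"
proof -
  have "aux_mult N (M l) (aux_scalar N W)
     \<doteq> aux_mult N (aux_mult N (upper b l) (aux_mult N (aux_smult c Z) (lower b l))) (aux_scalar N W)"
    by (intro aux_mult_cong1 aeq_trans[OF mono_decomp[OF b]] aux_mult_cong2 Z)
  also have "\<dots> = aux_smult c (aux_mult N (upper b l) (aux_mult N Z (aux_mult N (lower b l) (aux_scalar N W))))"
    by (simp add: aux_mult_smult_left aux_mult_smult_right aux_mult_assoc)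
  finally show ?thesis by (simp add: ptrace_cong ptrace_smult)
qed

lemma ptrace_at_eta:
  assumes b: "1 \<le> b" "b \<le> N"
  shows "ptrace (aux_mult N (M (eta b)) (aux_scalar N W)) = op_smult (qdiff q) (aux_to_site N b (cut_mono b (eta b) W))"
proof -
  have "eta b / eta b = 1" using eta b by auto
  then have Z: "lax N q b (eta b / eta b) \<doteq> aux_smult (qdiff q) (perm_aux N b)"
    using lax_one[OF b] by (simp only:)
  show ?thesis unfolding cut_mono_def ptrace_through_site[OF b Z]
    by (subst ptrace_perm[OF aux_alg_upper aux_alg_lower_scalar]) (use b in auto)
qed

lemma ptrace_at_eta_shift:
  assumes b: "1 \<le> b" "b \<le> N"
  shows "ptrace (aux_mult N (M (eta b / q)) (aux_scalar N W))
       = op_smult (- qdiff q) (aux_to_site N b (adj (cut_mono b (eta b / q) W)))"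
proof -
  have "eta b / q / eta b = inverse q" using eta b by (auto simp: field_simps)
  then have Z: "lax N q b (eta b / q / eta b) \<doteq> aux_smult (- qdiff q) (flip_aux N b)"
    using lax_invq[OF b q] by (simp only:)
  show ?thesis unfolding cut_mono_def ptrace_through_site[OF b Z]
    by (subst ptrace_flip[OF aux_alg_upper aux_alg_lower_scalar]) (use b in auto)
qed

lemma Tbar_at_eta:
  "1 \<le> b \<Longrightarrow> b \<le> N \<Longrightarrow> T (eta b) = op_smult (qdiff q) (aux_to_site N b (cut_mono b (eta b) sigx))"
  using Tbar_ptrace[OF aux_on_states_M] ptrace_at_eta by simp

lemma Tbar_at_eta_shift:
  "1 \<le> b \<Longrightarrow> b \<le> N \<Longrightarrow> T (eta b / q) = op_smult (- qdiff q) (aux_to_site N b (adj (cut_mono b (eta b / q) sigx)))"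
  using Tbar_ptrace[OF aux_on_states_M] ptrace_at_eta_shift by simp


lemma cut_mono_fusion:
  assumes b: "1 \<le> b" "b \<le> N"
  defines "dG \<equiv> (\<Prod>j=Suc b..N. delta q (eta b / eta j))"
  shows "aux_mult N (cut_mono b (eta b) W) (adj (cut_mono b (eta b / q) V))
     \<doteq> aux_smult dG (aux_mult N (lower b (eta b)) (aux_mult N (aux_scalar N (mat2_mult W (adj2 V))) (adj (lower b (eta b / q)))))"
proof -
  let ?L = "lower b (eta b)" and ?L' = "lower b (eta b / q)" and ?G = "upper b (eta b)" and ?G' = "upper b (eta b / q)"
  have etab: "eta b \<noteq> 0" using eta b by auto
  have fG: "aux_mult N ?G (adj ?G') \<doteq> aux_const N dG"
    using fusion_mono_from[of N N q "eta b" eta b] q etab eta by (simp add: fusion_def dG_def)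
  have adj1: "adj (aux_mult N (aux_mult N ?L' (aux_scalar N V)) ?G') \<doteq> aux_mult N (adj ?G') (adj (aux_mult N ?L' (aux_scalar N V)))"
    by (rule adj_mult, rule aux_commute_disjoint[OF aux_alg_lower_scalar aux_alg_upper]) (use b in auto)
  have adj2: "adj (aux_mult N ?L' (aux_scalar N V)) \<doteq> aux_mult N (adj (aux_scalar N V)) (adj ?L')"
    by (rule adj_mult, rule aux_commute_disjoint[OF aux_alg_lower aux_alg_scalar[of N "{}"]]) (use b in auto)
  have "aux_mult N (cut_mono b (eta b) W) (adj (cut_mono b (eta b / q) V))
     \<doteq> aux_mult N (aux_mult N (aux_mult N ?L (aux_scalar N W)) ?G) (aux_mult N (adj ?G') (aux_mult N (aux_scalar N (adj2 V)) (adj ?L')))"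
    unfolding cut_mono_def
    by (intro aux_mult_cong2 aeq_trans[OF adj1] aux_mult_cong2 aeq_trans[OF adj2] aux_mult_cong1 adj_scalar)
  also have "\<dots> = aux_mult N (aux_mult N ?L (aux_scalar N W)) (aux_mult N (aux_mult N ?G (adj ?G')) (aux_mult N (aux_scalar N (adj2 V)) (adj ?L')))"
    by (simp add: aux_mult_assoc)
  also have "\<dots> \<doteq> aux_mult N (aux_mult N ?L (aux_scalar N W)) (aux_mult N (aux_const N dG) (aux_mult N (aux_scalar N (adj2 V)) (adj ?L')))"
    by (intro aux_mult_cong2 aux_mult_cong1 fG)
  also have "\<dots> \<doteq> aux_mult N (aux_mult N ?L (aux_scalar N W)) (aux_smult dG (aux_mult N (aux_scalar N (adj2 V)) (adj ?L')))"
    by (intro aux_mult_cong2 aux_mult_const_left aux_on_states_mult aux_on_states_adj aux_alg_on_states[OF aux_alg_lower])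
      (use b in \<open>auto simp: aux_on_states_def aux_scalar_def\<close>)
  also have "\<dots> = aux_smult dG (aux_mult N ?L (aux_mult N (aux_mult N (aux_scalar N W) (aux_scalar N (adj2 V))) (adj ?L')))"
    by (simp add: aux_mult_smult_right aux_mult_assoc)
  also have "\<dots> \<doteq> aux_smult dG (aux_mult N ?L (aux_mult N (aux_scalar N (mat2_mult W (adj2 V))) (adj ?L')))"
    by (intro aux_smult_cong aux_mult_cong2 aux_mult_cong1 aux_mult_scalar)
  finally show ?thesis .
qed

lemma cut_mono_fusion_at_site:
  assumes b: "1 \<le> b" "b \<le> N"
  shows "op_mult N (aux_to_site N b (cut_mono b (eta b) W)) (aux_to_site N b (adj (cut_mono b (eta b / q) V)))
       = op_smult (\<Prod>j=Suc b..N. delta q (eta b / eta j))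
           (aux_to_site N b (aux_mult N (lower b (eta b)) (aux_mult N (aux_scalar N (mat2_mult W (adj2 V))) (adj (lower b (eta b / q))))))"
proof -
  have "op_mult N (aux_to_site N b (cut_mono b (eta b) W)) (aux_to_site N b (adj (cut_mono b (eta b / q) V)))
      = aux_to_site N b (aux_mult N (cut_mono b (eta b) W) (adj (cut_mono b (eta b / q) V)))"
    by (rule aux_to_site_mult[symmetric, OF aux_alg_adj[OF aux_alg_cut_mono]]) (use b in auto)
  then show ?thesis by (simp add: aux_to_site_cong[OF cut_mono_fusion[OF b]] aux_to_site_smult)
qed

lemma lower_fusion_scalar:
  assumes b: "1 \<le> b" "b \<le> N" and U: "\<And>x y. x < 2 \<Longrightarrow> y < 2 \<Longrightarrow> U x y = k * id2 x y"
  shows "aux_mult N (lower b (eta b)) (aux_mult N (aux_scalar N U) (adj (lower b (eta b / q))))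
      \<doteq> aux_const N (k * (\<Prod>j=1..b-1. delta q (eta b / eta j)))"
proof -
  have etab: "eta b \<noteq> 0" using eta b by auto
  have fL: "aux_mult N (lower b (eta b)) (adj (lower b (eta b / q))) \<doteq> aux_const N (\<Prod>j=1..b-1. delta q (eta b / eta j))"
    using fusion_mono[of "b-1" N q "eta b" eta] q etab eta b by (simp add: fusion_def)
  have "aux_mult N (lower b (eta b)) (aux_mult N (aux_scalar N U) (adj (lower b (eta b / q))))
      \<doteq> aux_mult N (lower b (eta b)) (aux_mult N (aux_const N k) (adj (lower b (eta b / q))))"
    unfolding aux_const_def by (intro aux_mult_cong2 aux_mult_cong1 aux_scalar_cong U)
  also have "\<dots> \<doteq> aux_mult N (lower b (eta b)) (aux_smult k (adj (lower b (eta b / q))))"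
    by (intro aux_mult_cong2 aux_mult_const_left aux_on_states_adj aux_alg_on_states[OF aux_alg_lower]) (use b in auto)
  also have "\<dots> = aux_smult k (aux_mult N (lower b (eta b)) (adj (lower b (eta b / q))))"
    by (simp add: aux_mult_smult_right)
  also have "\<dots> \<doteq> aux_smult k (aux_const N (\<Prod>j=1..b-1. delta q (eta b / eta j)))"
    by (rule aux_smult_cong[OF fL])
  finally show ?thesis by (simp add: aux_smult_const)
qed

lemma Tbar_fusion:
  assumes b: "1 \<le> b" "b \<le> N"
  shows "op_mult N (T (eta b)) (T (eta b / q)) = op_smult (afun N q eta (eta b) * dfun N eta (eta b / q)) (op_id N)"
proof -
  let ?dG = "\<Prod>j=Suc b..N. delta q (eta b / eta j)" and ?dL = "\<Prod>j=1..b-1. delta q (eta b / eta j)"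
  have etab: "eta b \<noteq> 0" using eta b by auto
  have U: "mat2_mult sigx (adj2 sigx) x y = (-1) * id2 x y" if "x < 2" "y < 2" for x y
    using that by (auto simp: mat2_mult_def adj2_def sigx_def id2_def less2)
  have "op_mult N (T (eta b)) (T (eta b / q)) = op_smult (qdiff q * (- qdiff q))
     (op_smult ?dG (aux_to_site N b (aux_mult N (lower b (eta b))
        (aux_mult N (aux_scalar N (mat2_mult sigx (adj2 sigx))) (adj (lower b (eta b / q)))))))"
    by (simp only: Tbar_at_eta[OF b] Tbar_at_eta_shift[OF b] op_mult_smult_both cut_mono_fusion_at_site[OF b])
  also have "\<dots> = op_smult (qdiff q * (- qdiff q)) (op_smult ?dG (aux_to_site N b (aux_const N (-1 * ?dL))))"
    by (simp only: aux_to_site_cong[OF lower_fusion_scalar[OF b U]])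
  also have "\<dots> = op_smult ((qdiff q * qdiff q) * ?dG * ?dL) (op_id N)"
    by (simp add: aux_to_site_const[OF b] op_smult_smult algebra_simps)
  also have "(qdiff q * qdiff q) * ?dG * ?dL = afun N q eta (eta b) * dfun N eta (eta b / q)"
    using ad_prod[OF q etab eta] prod_split3[OF b, of "\<lambda>j. delta q (eta b / eta j)"] etab delta_one[OF q]
    by (simp add: algebra_simps)
  finally show ?thesis .
qed

text \<open>Exchanging \<open>tr_0(M(\<eta>_b) X \<sigma>^x)\<close> with \<open>T(\<eta>_b/q)\<close>: this turns the first
  reconstruction formula into the second one.\<close>
lemma trace_exchange:
  assumes b: "1 \<le> b" "b \<le> N"
  shows "op_mult N (ptrace (aux_mult N (M (eta b)) (aux_scalar N (mat2_mult X sigx)))) (T (eta b / q))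
       = - op_mult N (T (eta b)) (ptrace (aux_mult N (M (eta b / q)) (aux_scalar N (flip_sigx X))))"
proof -
  let ?dG = "\<Prod>j=Suc b..N. delta q (eta b / eta j)"
  let ?F = "\<lambda>U. aux_to_site N b (aux_mult N (lower b (eta b)) (aux_mult N (aux_scalar N U) (adj (lower b (eta b / q)))))"
  have e1: "aux_scalar N (mat2_mult (mat2_mult X sigx) (adj2 sigx)) \<doteq> aux_smult (-1) (aux_scalar N X)"
    unfolding aux_scalar_neg[symmetric]
    by (rule aux_scalar_cong) (auto simp: mat2_mult_def adj2_def sigx_def less2)
  have e2: "aux_scalar N (mat2_mult sigx (adj2 (flip_sigx X))) \<doteq> aux_scalar N X"
    by (rule aux_scalar_cong) (auto simp: mat2_mult_def adj2_def sigx_def sigz_def flip_sigx_def less2)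
  have F1: "?F (mat2_mult (mat2_mult X sigx) (adj2 sigx)) = op_smult (-1) (?F X)"
    using aux_to_site_cong[OF aux_mult_cong2[OF aux_mult_cong1[OF e1]]]
    by (simp add: aux_mult_smult_left aux_mult_smult_right aux_to_site_smult)
  have F2: "?F (mat2_mult sigx (adj2 (flip_sigx X))) = ?F X"
    by (intro aux_to_site_cong aux_mult_cong2 aux_mult_cong1 e2)
  have "op_mult N (ptrace (aux_mult N (M (eta b)) (aux_scalar N (mat2_mult X sigx)))) (T (eta b / q))
      = op_smult (qdiff q * (- qdiff q)) (op_smult ?dG (?F (mat2_mult (mat2_mult X sigx) (adj2 sigx))))"
    by (simp only: ptrace_at_eta[OF b] Tbar_at_eta_shift[OF b] op_mult_smult_both cut_mono_fusion_at_site[OF b])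
  moreover have "op_mult N (T (eta b)) (ptrace (aux_mult N (M (eta b / q)) (aux_scalar N (flip_sigx X))))
      = op_smult (qdiff q * (- qdiff q)) (op_smult ?dG (?F (mat2_mult sigx (adj2 (flip_sigx X)))))"
    by (simp only: ptrace_at_eta_shift[OF b] Tbar_at_eta[OF b] op_mult_smult_both cut_mono_fusion_at_site[OF b])
  ultimately show ?thesis using F1 F2
    by (simp add: op_smult_smult fun_eq_iff op_smult_def)
qed


lemma ad_factor_nonzero:
  assumes H: "afun N q eta (eta b) * dfun N eta (eta b / q) \<noteq> 0" and c: "c \<in> {1..N}"
  shows "eta b * q / eta c - eta c / (eta b * q) \<noteq> 0" "eta b / q / eta c - eta c / (eta b / q) \<noteq> 0"
  using H c by (auto simp: afun_def dfun_def prod_zero_iff)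

text \<open>By the RTT relation, \<open>T(\<eta>_b)\<close> and \<open>T(\<eta>_c)\<close> commute; the non-degeneracy
  hypothesis rules out the zeros of the R-matrix coefficients.\<close>
lemma Tbar_commute:
  assumes H: "afun N q eta (eta b) * dfun N eta (eta b / q) \<noteq> 0" and b: "b \<in> {1..N}" and c: "c \<in> {1..N}"
  shows "op_mult N (T (eta b)) (T (eta c)) = op_mult N (T (eta c)) (T (eta b))"
proof (cases "b = c")
  case True then show ?thesis by simp
next
  case False
  have eb: "eta b \<noteq> 0" and ec: "eta c \<noteq> 0" using eta b c by auto
  let ?x = "eta b / eta c"
  note f = ad_factor_nonzero[OF H c]
  have al: "?x * q - inverse (q * ?x) \<noteq> 0"
    using f(1) eb ec q by (simp add: field_simps)
  have "(?x - inverse ?x) * (?x - inverse ?x) - (q - inverse q) * (q - inverse q)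
      = (eta b * q / eta c - eta c / (eta b * q)) * (eta b / q / eta c - eta c / (eta b / q))"
    using eb ec q by (simp add: field_simps)
  then have be: "(?x - inverse ?x) * (?x - inverse ?x) \<noteq> (q - inverse q) * (q - inverse q)"
    using f by auto
  have r: "rtt N q ?x (M (eta b)) (M (eta c))"
    unfolding monodromy_def by (rule rtt_mono[OF le_refl q eb ec eta])
  show ?thesis
    using rtt_commute_BC[OF r al be] by (simp add: Tbar_def opB_def opC_def op_add_eq)
qed

end


context spin_chain
begin

section \<open>Products of transfer matrices at the inhomogeneities\<close>

definition lax_sites :: "nat \<Rightarrow> nat \<Rightarrow> cop" where
  "lax_sites b k = aux_to_site N b (lax N q k (eta b / eta k))"
definition upper_at_site :: "nat \<Rightarrow> nat \<Rightarrow> cop" where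
  "upper_at_site b m = aux_to_site N b (mono_from N q eta m N (eta b))"
definition lower_at_site :: "nat \<Rightarrow> nat \<Rightarrow> cop" where
  "lower_at_site b j = aux_to_site N b (mono N q eta j (eta b))"

lemma upper_at_site_site_alg: "1 \<le> b \<Longrightarrow> b \<le> N \<Longrightarrow> upper_at_site b m \<in> site_alg N (insert b {Suc m..N})"
  unfolding upper_at_site_def by (rule aux_to_site_site_alg[OF aux_alg_mono_from]) auto

lemma lower_at_site_site_alg: "1 \<le> b \<Longrightarrow> b \<le> N \<Longrightarrow> j \<le> N \<Longrightarrow> lower_at_site b j \<in> site_alg N (insert b {1..j})"
  unfolding lower_at_site_def by (rule aux_to_site_site_alg[OF aux_alg_mono_partial]) auto

lemma on_states_upper_at_site: "1 \<le> b \<Longrightarrow> b \<le> N \<Longrightarrow> on_states N (upper_at_site b k)"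
  by (rule site_alg_on_states[OF upper_at_site_site_alg])
lemma on_states_lower_at_site: "1 \<le> b \<Longrightarrow> b \<le> N \<Longrightarrow> k \<le> N \<Longrightarrow> on_states N (lower_at_site b k)"
  by (rule site_alg_on_states[OF lower_at_site_site_alg])

lemma lower_at_site_0: "1 \<le> b \<Longrightarrow> b \<le> N \<Longrightarrow> lower_at_site b 0 = op_id N"
  by (simp add: lower_at_site_def aux_to_site_scalar loc_id)

lemma lower_at_site_Suc:
  "1 \<le> b \<Longrightarrow> b \<le> N \<Longrightarrow> j < b \<Longrightarrow> Suc j \<le> N \<Longrightarrow>
    lower_at_site b (Suc j) = op_mult N (lax_sites b (Suc j)) (lower_at_site b j)"
  unfolding lower_at_site_def lax_sites_def
  by (simp, rule aux_to_site_mult[OF aux_alg_mono_partial[of j N q eta]]) auto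

lemma upper_at_site_Suc:
  assumes "1 \<le> b" "b \<le> m" "m < N"
  shows "upper_at_site b m = op_mult N (upper_at_site b (Suc m)) (lax_sites b (Suc m))"
proof -
  have "upper_at_site b m
      = aux_to_site N b (aux_mult N (mono_from N q eta (Suc m) N (eta b)) (lax N q (Suc m) (eta b / eta (Suc m))))"
    unfolding upper_at_site_def by (rule aux_to_site_cong[OF mono_from_split]) (use assms in auto)
  also have "\<dots> = op_mult N (upper_at_site b (Suc m)) (lax_sites b (Suc m))"
    unfolding upper_at_site_def lax_sites_def by (rule aux_to_site_mult[OF aux_alg_lax]) (use assms in auto)
  finally show ?thesis .
qed

lemma lax_sites_unitarity:
  assumes h: "1 \<le> b" "b \<le> N" "1 \<le> k" "k \<le> N" "b \<noteq> k"
  shows "op_mult N (lax_sites b k) (lax_sites k b) = op_smult (rho q (eta b / eta k)) (op_id N)"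
proof -
  have e: "eta b \<noteq> 0" "eta k \<noteq> 0" using eta h by auto
  then have "eta k / eta b = inverse (eta b / eta k)" by simp
  then show ?thesis unfolding lax_sites_def using aux_to_site_lax_unitarity[OF h q, of "eta b / eta k"] e by simp
qed

lemma ptrace_at_eta_factorized:
  assumes b: "1 \<le> b" "b \<le> N"
  shows "ptrace (aux_mult N (M (eta b)) (aux_scalar N W))
       = op_smult (qdiff q) (op_mult N (op_mult N (lower_at_site b (b - 1)) (loc N b W)) (upper_at_site b b))"
proof -
  have "aux_to_site N b (cut_mono b (eta b) W)
     = op_mult N (aux_to_site N b (aux_mult N (lower b (eta b)) (aux_scalar N W))) (aux_to_site N b (upper b (eta b)))"
    unfolding cut_mono_def by (rule aux_to_site_mult[OF aux_alg_upper]) (use b in auto)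
  also have "aux_to_site N b (aux_mult N (lower b (eta b)) (aux_scalar N W))
      = op_mult N (aux_to_site N b (lower b (eta b))) (aux_to_site N b (aux_scalar N W))"
    by (rule aux_to_site_mult[OF aux_alg_scalar[of N "{}"]]) (use b in auto)
  finally show ?thesis
    using ptrace_at_eta[OF b] by (simp add: lower_at_site_def upper_at_site_def aux_to_site_scalar[OF b])
qed

lemma Tbar_at_eta_factorized:
  "1 \<le> b \<Longrightarrow> b \<le> N \<Longrightarrow>
    T (eta b) = op_smult (qdiff q) (op_mult N (op_mult N (lower_at_site b (b - 1)) (loc N b sigx)) (upper_at_site b b))"
  using Tbar_ptrace[OF aux_on_states_M] ptrace_at_eta_factorized by simp

text \<open>\<open>T_prod m = T(\<eta>_1) \<cdots> T(\<eta>_m)\<close> equals \<open>K_m \<sigma>^x_1 \<cdots> \<sigma>^x_m \<Prod>_{b \<le> m} upper_at_site b m\<close>,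
  which is proved by induction on \<open>m\<close>, the unitarity of the Lax operators cancelling
  the lower parts.\<close>
definition upper_prod :: "nat \<Rightarrow> nat \<Rightarrow> cop" where
  "upper_prod m j = op_prod N (map (\<lambda>b. upper_at_site b m) [1..<Suc j])"
definition sigx_prod :: "nat \<Rightarrow> cop" where
  "sigx_prod j = op_prod N (map (\<lambda>b. loc N b sigx) [1..<Suc j])"
definition T_prod :: "nat \<Rightarrow> cop" where
  "T_prod j = op_prod N (map (\<lambda>b. T (eta b)) [1..<Suc j])"
definition T_prod_coeff :: "nat \<Rightarrow> complex" where
  "T_prod_coeff j = qdiff q ^ j * (\<Prod>k=1..j. \<Prod>b=1..k-1. rho q (eta b / eta k))"

lemma T_prod_coeff_Suc:
  "T_prod_coeff (Suc m) = T_prod_coeff m * qdiff q * (\<Prod>b=1..m. rho q (eta b / eta (Suc m)))"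
  by (simp add: T_prod_coeff_def prod.nat_ivl_Suc' mult_ac)

lemma upper_prod_site_alg: "j \<le> N \<Longrightarrow> upper_prod m j \<in> site_alg N ({1..j} \<union> {Suc m..N})"
  unfolding upper_prod_def by (rule site_alg_op_prod) (auto intro: site_alg_mono[OF upper_at_site_site_alg])

lemma sigx_prod_site_alg: "j \<le> N \<Longrightarrow> sigx_prod j \<in> site_alg N {1..j}"
  unfolding sigx_prod_def by (rule site_alg_op_prod) (auto intro: site_alg_loc)

lemma upt_Suc_snoc: "[1..<Suc (Suc j)] = [1..<Suc j] @ [Suc j]" by simp

lemma upper_prod_snoc: "Suc j \<le> N \<Longrightarrow> upper_prod m (Suc j) = op_mult N (upper_prod m j) (upper_at_site (Suc j) m)"
  unfolding upper_prod_def upt_Suc_snoc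
  by (simp only: map_append list.map) (rule op_prod_snoc, auto intro: on_states_upper_at_site)

lemma sigx_prod_snoc: "Suc j \<le> N \<Longrightarrow> sigx_prod (Suc j) = op_mult N (sigx_prod j) (loc N (Suc j) sigx)"
  unfolding sigx_prod_def upt_Suc_snoc by (simp only: map_append list.map) (rule op_prod_snoc, auto)

lemma T_prod_snoc: "T_prod (Suc j) = op_mult N (T_prod j) (T (eta (Suc j)))"
  unfolding T_prod_def upt_Suc_snoc by (simp only: map_append list.map) (rule op_prod_snoc, auto intro: on_states_T)

lemma upper_prod_absorb:
  assumes "j \<le> m" "m < N"
  shows "op_mult N (upper_prod m j) (lower_at_site (Suc m) j)
       = op_smult (\<Prod>b=1..j. rho q (eta b / eta (Suc m))) (upper_prod (Suc m) j)"
  using assms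
proof (induction j)
  case 0
  then show ?case by (simp add: upper_prod_def op_prod_def lower_at_site_0 op_id_left)
next
  case (Suc j)
  let ?\<rho> = "rho q (eta (Suc j) / eta (Suc m))" and ?\<rho>j = "\<Prod>b=1..j. rho q (eta b / eta (Suc m))"
  let ?U = "upper_at_site (Suc j) (Suc m)" and ?L = "lower_at_site (Suc m) j"
  have h: "Suc j \<le> m" "m < N" using Suc.prems by auto
  have c: "op_mult N ?U ?L = op_mult N ?L ?U"
    by (rule site_alg_comm[OF lower_at_site_site_alg upper_at_site_site_alg]) (use h in auto)
  have "op_mult N (upper_prod m (Suc j)) (lower_at_site (Suc m) (Suc j))
     = op_mult N (upper_prod m j) (op_mult N ?U (op_mult N (op_mult N (lax_sites (Suc j) (Suc m)) (lax_sites (Suc m) (Suc j))) ?L))"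
    using h by (simp add: upper_prod_snoc upper_at_site_Suc lower_at_site_Suc op_mult_assoc)
  also have "\<dots> = op_smult ?\<rho> (op_mult N (op_mult N (upper_prod m j) ?L) ?U)"
    using h by (simp add: lax_sites_unitarity op_mult_id_smult on_states_lower_at_site op_mult_smult_right c op_mult_assoc)
  also have "\<dots> = op_smult (?\<rho>j * ?\<rho>) (upper_prod (Suc m) (Suc j))"
    using Suc.IH h by (simp add: op_mult_smult_left upper_prod_snoc op_smult_smult mult.commute)
  finally show ?case by (simp add: prod.nat_ivl_Suc')
qed

lemma T_prod_step:
  assumes m: "m < N" and G: "T_prod m = op_smult (T_prod_coeff m) (op_mult N (sigx_prod m) (upper_prod m m))"
  shows "op_mult N (T_prod m) (op_smult (qdiff q) (op_mult N (op_mult N (lower_at_site (Suc m) m) (loc N (Suc m) Q)) (upper_at_site (Suc m) (Suc m))))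
       = op_smult (T_prod_coeff (Suc m)) (op_mult N (op_mult N (sigx_prod m) (loc N (Suc m) Q)) (upper_prod (Suc m) (Suc m)))"
proof -
  let ?\<rho>s = "\<Prod>b=1..m. rho q (eta b / eta (Suc m))"
  have c: "op_mult N (upper_prod (Suc m) m) (loc N (Suc m) Q) = op_mult N (loc N (Suc m) Q) (upper_prod (Suc m) m)"
    by (rule site_alg_comm[OF site_alg_loc upper_prod_site_alg]) (use m in auto)
  have "op_mult N (T_prod m) (op_smult (qdiff q) (op_mult N (op_mult N (lower_at_site (Suc m) m) (loc N (Suc m) Q)) (upper_at_site (Suc m) (Suc m))))
      = op_smult (T_prod_coeff m * qdiff q) (op_mult N (sigx_prod m) (op_mult N (op_mult N (upper_prod m m) (lower_at_site (Suc m) m)) (op_mult N (loc N (Suc m) Q) (upper_at_site (Suc m) (Suc m)))))"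
    by (simp add: G op_mult_smult_both op_mult_assoc)
  also have "\<dots> = op_smult (T_prod_coeff m * qdiff q * ?\<rho>s) (op_mult N (sigx_prod m) (op_mult N (op_mult N (upper_prod (Suc m) m) (loc N (Suc m) Q)) (upper_at_site (Suc m) (Suc m))))"
    using m by (simp add: upper_prod_absorb op_mult_smult_left op_mult_smult_right op_smult_smult op_mult_assoc mult.assoc)
  also have "\<dots> = op_smult (T_prod_coeff (Suc m)) (op_mult N (op_mult N (sigx_prod m) (loc N (Suc m) Q)) (upper_prod (Suc m) (Suc m)))"
    using m by (simp add: c T_prod_coeff_Suc upper_prod_snoc op_mult_assoc)
  finally show ?thesis .
qed

lemma T_prod_factorization: "m \<le> N \<Longrightarrow> T_prod m = op_smult (T_prod_coeff m) (op_mult N (sigx_prod m) (upper_prod m m))"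
proof (induction m)
  case 0
  then show ?case by (simp add: T_prod_def sigx_prod_def upper_prod_def op_prod_def T_prod_coeff_def op_id_left)
next
  case (Suc m)
  then have m: "m < N" by simp
  have "T_prod (Suc m) = op_mult N (T_prod m) (op_smult (qdiff q) (op_mult N (op_mult N (lower_at_site (Suc m) m) (loc N (Suc m) sigx)) (upper_at_site (Suc m) (Suc m))))"
    using m by (simp add: T_prod_snoc Tbar_at_eta_factorized)
  also have "\<dots> = op_smult (T_prod_coeff (Suc m)) (op_mult N (op_mult N (sigx_prod m) (loc N (Suc m) sigx)) (upper_prod (Suc m) (Suc m)))"
    by (rule T_prod_step[OF m Suc.IH]) (use m in simp)
  finally show ?case using m by (simp add: sigx_prod_snoc)
qed

lemma T_prod_trace:
  assumes n: "1 \<le> n" "n \<le> N"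
  shows "op_mult N (T_prod (n - 1)) (ptrace (aux_mult N (M (eta n)) (aux_scalar N (mat2_mult X sigx))))
       = op_mult N (loc N n X) (T_prod n)"
proof -
  obtain m where nm: "n = Suc m" using n by (cases n) auto
  have m: "m < N" using n nm by simp
  have c: "op_mult N (sigx_prod m) (op_mult N (loc N (Suc m) X) Z) = op_mult N (loc N (Suc m) X) (op_mult N (sigx_prod m) Z)" for Z
    by (rule op_mult_left_commute, rule site_alg_comm[OF site_alg_loc sigx_prod_site_alg]) (use m in auto)
  have "op_mult N (T_prod m) (ptrace (aux_mult N (M (eta (Suc m))) (aux_scalar N (mat2_mult X sigx))))
     = op_smult (T_prod_coeff (Suc m)) (op_mult N (op_mult N (sigx_prod m) (loc N (Suc m) (mat2_mult X sigx))) (upper_prod (Suc m) (Suc m)))"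
    using ptrace_at_eta_factorized[of "Suc m" "mat2_mult X sigx"] m T_prod_step[OF m T_prod_factorization[of m]] by simp
  also have "\<dots> = op_mult N (loc N (Suc m) X) (T_prod (Suc m))"
    using m by (simp add: T_prod_factorization sigx_prod_snoc loc_mult_same[symmetric] op_mult_smult_right c op_mult_assoc)
  finally show ?thesis using nm by simp
qed


section \<open>Inverting the transfer matrices: reconstruction of local operators\<close>

text \<open>Under the non-degeneracy hypothesis \<open>T(\<eta>_b)\<close> is invertible with inverse
  \<open>T(\<eta>_b/q) / (a(\<eta>_b) d(\<eta>_b/q))\<close>.\<close>
abbreviation "\<alpha> b \<equiv> afun N q eta (eta b) * dfun N eta (eta b / q)"

definition T_inv :: "nat \<Rightarrow> cop" where
  "T_inv b = op_smult (inverse (\<alpha> b)) (T (eta b / q))"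

lemma Tbar_T_inv:
  assumes b: "b \<in> {1..N}" and a: "\<alpha> b \<noteq> 0"
  shows "op_mult N (T (eta b)) (T_inv b) = op_id N"
proof -
  have "op_mult N (T (eta b)) (T_inv b) = op_smult (inverse (\<alpha> b) * \<alpha> b) (op_id N)"
    using b by (simp only: T_inv_def op_mult_smult_right Tbar_fusion op_smult_smult atLeastAtMost_iff)
  then show ?thesis by (simp only: left_inverse[OF a] op_smult_one)
qed

lemma on_states_T_inv: "on_states N (T_inv b)"
  by (simp add: T_inv_def on_states_T)

lemma T_prod_inverse:
  assumes H: "\<forall>b\<in>{1..N}. \<alpha> b \<noteq> 0" and n: "n \<le> N"
  shows "op_mult N (T_prod n) (op_prod N (map T_inv [1..<Suc n])) = op_id N"
proof -
  have "T_prod n = op_prod N (rev (map (\<lambda>b. T (eta b)) [1..<Suc n]))"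
    unfolding T_prod_def using n H by (intro op_prod_rev[symmetric]) (auto intro: Tbar_commute on_states_T)
  moreover have "op_mult N (op_prod N (rev (map (\<lambda>b. T (eta b)) [1..<Suc n]))) (op_prod N (map T_inv [1..<Suc n])) = op_id N"
    by (rule op_prod_telescope) (use n H in \<open>auto intro!: Tbar_T_inv on_states_T_inv simp del: mult_eq_0_iff\<close>)
  ultimately show ?thesis by simp
qed

lemma reconstruction_left:
  assumes H: "\<forall>b\<in>{1..N}. \<alpha> b \<noteq> 0" and n: "n \<in> {1..N}"
  shows "loc N n X = op_mult N (op_prod N (map (\<lambda>b. T (eta b)) [1..<n]))
      (op_mult N (ptrace (aux_mult N (aux_mult N (M (eta n)) (aux_scalar N X)) (aux_scalar N sigx)))
                 (op_prod N (map T_inv [1..<Suc n])))"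
proof -
  have n1: "1 \<le> n" "n \<le> N" using n by auto
  then have prev: "op_prod N (map (\<lambda>b. T (eta b)) [1..<n]) = T_prod (n - 1)" by (simp add: T_prod_def)
  have "loc N n X = op_mult N (loc N n X) (op_mult N (T_prod n) (op_prod N (map T_inv [1..<Suc n])))"
    using T_prod_inverse[OF H n1(2)] by (simp add: op_id_right)
  also have "\<dots> = op_mult N (op_mult N (T_prod (n - 1)) (ptrace (aux_mult N (M (eta n)) (aux_scalar N (mat2_mult X sigx)))))
                    (op_prod N (map T_inv [1..<Suc n]))"
    by (simp only: op_mult_assoc[symmetric] T_prod_trace[OF n1])
  finally show ?thesis unfolding prev by (simp only: op_mult_assoc ptrace_sigx_assoc)
qed

text \<open>Second reconstruction formula, obtained from the first by moving \<open>T(\<eta>_n/q)\<close>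
  through the trace with \<open>trace_exchange\<close>.\<close>
lemma reconstruction_right:
  assumes H: "\<forall>b\<in>{1..N}. \<alpha> b \<noteq> 0" and n: "n \<in> {1..N}"
  shows "loc N n X = op_mult N (op_prod N (map (\<lambda>b. T (eta b)) [1..<Suc n])) (op_mult N (op_smult (inverse (- \<alpha> n))
     (ptrace (aux_mult N (aux_mult N (aux_mult N (aux_mult N (aux_scalar N sigz) (ptransp (M (eta n / q))))
       (aux_scalar N sigz)) (aux_scalar N X)) (aux_scalar N sigx))))
     (op_prod N (map T_inv [1..<n])))"
proof -
  have n1: "1 \<le> n" "n \<le> N" using n by auto
  obtain m where nm: "n = Suc m" using n1 by (cases n) auto
  have m: "m < N" using n1 nm by simp
  have an: "\<alpha> n \<noteq> 0" using H n by auto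
  let ?Y = "ptrace (aux_mult N (M (eta n)) (aux_scalar N (mat2_mult X sigx)))"
  let ?Z = "ptrace (aux_mult N (M (eta n / q)) (aux_scalar N (flip_sigx X)))"
  have on_prod: "on_states N (T_prod m)" unfolding T_prod_def by (rule on_states_op_prod) (auto intro: on_states_T)
  have "op_mult N (loc N n X) (T_prod m) = op_mult N (op_mult N (loc N n X) (T_prod n)) (T_inv n)"
    using Tbar_T_inv[OF n an] nm on_prod by (simp add: T_prod_snoc op_mult_assoc op_id_right)
  also have "\<dots> = op_mult N (op_mult N (T_prod m) ?Y) (T_inv n)"
    using T_prod_trace[OF n1, of X] nm by simp
  also have "\<dots> = op_mult N (T_prod m) (op_smult (inverse (\<alpha> n)) (op_mult N ?Y (T (eta n / q))))"
    by (simp only: T_inv_def op_mult_assoc op_mult_smult_right)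
  also have "\<dots> = op_mult N (T_prod n) (op_smult (inverse (- \<alpha> n)) ?Z)"
    using nm trace_exchange[OF n1, of X]
    by (simp add: T_prod_snoc op_mult_assoc op_mult_smult_right op_smult_uminus op_smult_minus_scalar[symmetric])
  finally have key: "op_mult N (loc N n X) (T_prod m) = op_mult N (T_prod n) (op_smult (inverse (- \<alpha> n)) ?Z)" .
  have "loc N n X = op_mult N (loc N n X) (op_mult N (T_prod m) (op_prod N (map T_inv [1..<Suc m])))"
    using T_prod_inverse[OF H] m by (simp add: op_id_right)
  also have "\<dots> = op_mult N (op_mult N (T_prod n) (op_smult (inverse (- \<alpha> n)) ?Z)) (op_prod N (map T_inv [1..<Suc m]))"
    by (simp only: op_mult_assoc[symmetric] key)
  finally show ?thesis
    using nm ptrace_transp[OF aux_on_states_M, of "eta n / q" X] by (simp only: op_mult_assoc T_prod_def)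
qed

lemma qdet_eta:
  assumes b: "b \<in> {1..N}"
  shows "qdet N q eta (eta b) = op_smult (- \<alpha> b) (op_id N)"
proof -
  have e: "eta b \<noteq> 0" using eta b by auto
  show ?thesis using qdet_formula[OF q e eta] ad_prod[OF q e eta] by simp
qed

lemma qdetbar_eta:
  assumes b: "b \<in> {1..N}"
  shows "qdetbar N q eta (eta b) = op_smult (\<alpha> b) (op_id N)"
proof -
  have "qdetbar N q eta l = - qdet N q eta l" for l by (simp add: qdetbar_def qdet_def op_diff_eq)
  then show ?thesis using qdet_eta[OF b] by (simp add: op_smult_minus_scalar)
qed

end

theorem mainTheorem9:
  fixes N :: nat and q :: complex and eta :: "nat \<Rightarrow> complex"
  assumes "N \<ge> 1" and "q \<noteq> 0" and "q \<noteq> 1" and "q \<noteq> -1"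
    and "\<forall>b\<in>{1..N}. eta b \<noteq> 0"
    and "\<forall>b\<in>{1..N}. afun N q eta (eta b) * dfun N eta (eta b / q) \<noteq> 0"
  shows "(\<forall>b\<in>{1..N}.
            op_mult N (Tbar N q eta (eta b)) (Tbar N q eta (eta b / q)) = qdetbar N q eta (eta b)
          \<and> qdetbar N q eta (eta b)
              = op_smult (afun N q eta (eta b) * dfun N eta (eta b / q)) (op_id N))
       \<and> (\<forall>n\<in>{1..N}.
            qdet N q eta (eta n) = op_smult (- (afun N q eta (eta n) * dfun N eta (eta n / q))) (op_id N)
          \<and> (\<forall>X :: nat \<Rightarrow> nat \<Rightarrow> complex.
               loc N n X
                 = op_mult N
                     (op_prod N (map (\<lambda>b. Tbar N q eta (eta b)) [1..<n]))
                     (op_mult N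
                        (ptrace (aux_mult N (aux_mult N (monodromy N q eta (eta n)) (aux_scalar N X))
                                            (aux_scalar N sigx)))
                        (op_prod N (map (\<lambda>b. op_smult (inverse (afun N q eta (eta b) * dfun N eta (eta b / q)))
                                                       (Tbar N q eta (eta b / q))) [1..<Suc n])))
             \<and> loc N n X
                 = op_mult N
                     (op_prod N (map (\<lambda>b. Tbar N q eta (eta b)) [1..<Suc n]))
                     (op_mult N
                        (op_smult (inverse (- (afun N q eta (eta n) * dfun N eta (eta n / q))))
                          (ptrace (aux_mult N (aux_mult N (aux_mult N (aux_mult N
                                     (aux_scalar N sigz) (ptransp (monodromy N q eta (eta n / q))))
                                     (aux_scalar N sigz)) (aux_scalar N X)) (aux_scalar N sigx))))
                        (op_prod N (map (\<lambda>b. op_smult (inverse (afun N q eta (eta b) * dfun N eta (eta b / q)))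
                                                       (Tbar N q eta (eta b / q))) [1..<n])))))"
proof -
  interpret spin_chain N q eta
    using assms(2,5) by unfold_locales
  show ?thesis
    using Tbar_fusion qdetbar_eta qdet_eta reconstruction_left[OF assms(6)] reconstruction_right[OF assms(6)]
    unfolding T_inv_def[abs_def] by auto
qed

end
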